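(* Let $T=(T,\mu,\iota)$ be a normal lax double monad on an equipment $\mathcal K$. If the vertical morphism $g\colon C\to A$ has a left adjoint in the vertical $2$-category $V(\mathcal K)$, then the cell $\iota_{g^*}$ (where $g^*\colon A\nrightarrow C$ is the conjoint of $g$) satisfies the right Beck–Chevalley condition.
   Context: Double categories: a double category has objects, vertical morphisms (composition $\circ$), horizontal morphisms $J\colon A\nrightarrow B$ (composition $\odot$ in diagrammatic order, units $1_A$, weakly associative/unital) and cells with horizontal source $J\colon A\nrightarrow B$, horizontal target $K\colon C\nrightarrow D$, vertical sides $f\colon A\to C$, $g\colon B\to D$. Vertical cells (units as horizontal source and target) form, with objects and vertical morphisms, the $2$-category $V(\mathcal K)$. A cell $\phi\colon J\Rightarrow K$ with sides $f,g$ is cartesian if every cell $H\Rightarrow K$ with sides $f\circ h,g\circ k$ factors uniquely through $\phi$ via a cell $H\Rightarrow J$ with sides $h,k$; opcartesian dually. The companion of $f\colon A\to C$ is $f_*=1_C(f,\mathrm{id})\colon A\nrightarrow C$ (given by a cartesian cell $f_*\Rightarrow 1_C$ with sides $f,\mathrm{id}_C$, equivalently an opcartesian cell $1_A\Rightarrow f_*$ with sides $\mathrm{id}_A,f$); the conjoint of $g\colon C\to A$ is $g^*=1_A(\mathrm{id},g)\colon A\nrightarrow C$. An equipment has all companions and conjoints. A normal lax double monad $(T,\mu,\iota)$ on $\mathcal K$: a lax double functor $T\colon\mathcal K\to\mathcal K$ preserving vertical structure and horizontal units strictly and horizontal composition up to coherent compositor cells, with double transformations $\mu\colon T^2\Rightarrow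 T$, $\iota\colon\mathrm{id}\Rightarrow T$ satisfying the monad axioms; $\iota$ consists of vertical morphisms $\iota_A\colon A\to TA$ and cells $\iota_J\colon J\Rightarrow TJ$ with sides $\iota_A,\iota_B$, natural and compatible with compositors, $\iota_{1_A}=1_{\iota_A}$. Right Beck–Chevalley condition: for $J\colon A\nrightarrow B$ let $\iota_{J*}\colon J\odot\iota_{B*}\Rightarrow\iota_{A*}\odot TJ$ be the horizontal composite of the opcartesian cell $1_A\Rightarrow\iota_{A*}$ (sides $\mathrm{id}_A,\iota_A$), $\iota_J$, and the cartesian cell $\iota_{B*}\Rightarrow 1_{TB}$ (sides $\iota_B,\mathrm{id}_{TB}$); $\iota_J$ satisfies the right Beck–Chevalley condition if $\iota_{J*}$ is invertible. *)

theory Defs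
  imports Main
begin

text \<open>A double category is given by sets of objects, vertical morphisms, horizontal
morphisms and cells together with (total functions representing) the partial
operations.  Conventions:
  vcmp D g f  = g o f  (vertical composition of vertical morphisms, f first);
  hcmp D J K  = J (.) K in diagrammatic order (J : A -/-> B, K : B -/-> C);
  a cell phi has horizontal source csrc phi, horizontal target ctgt phi,
  left vertical side cleft phi and right vertical side cright phi;
  cvcmp D psi phi = psi after phi (vertical composition of cells);
  chcmp D phi psi = phi (.) psi (horizontal composition of cells, diagrammatic);
  cunit D f = the horizontal unit cell 1_f : 1_A => 1_C on f : A -> C;
  hassoc J K L : (J.K).L => J.(K.L),  hlunit J : 1_A . J => J,
  hrunit J : J . 1_B => J  (globular, invertible, natural, coherent).\<close>

record ('o,'v,'h,'c) dblcat =
  Ob :: "'o set"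
  Ver :: "'v set"
  vdom :: "'v \<Rightarrow> 'o"
  vcod :: "'v \<Rightarrow> 'o"
  vcmp :: "'v \<Rightarrow> 'v \<Rightarrow> 'v"
  vid :: "'o \<Rightarrow> 'v"
  Hor :: "'h set"
  hsrc :: "'h \<Rightarrow> 'o"
  htgt :: "'h \<Rightarrow> 'o"
  hcmp :: "'h \<Rightarrow> 'h \<Rightarrow> 'h"
  hunit :: "'o \<Rightarrow> 'h"
  Cel :: "'c set"
  csrc :: "'c \<Rightarrow> 'h"
  ctgt :: "'c \<Rightarrow> 'h"
  cleft :: "'c \<Rightarrow> 'v"
  cright :: "'c \<Rightarrow> 'v"
  cvcmp :: "'c \<Rightarrow> 'c \<Rightarrow> 'c"
  cvid :: "'h \<Rightarrow> 'c"
  chcmp :: "'c \<Rightarrow> 'c \<Rightarrow> 'c"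
  cunit :: "'v \<Rightarrow> 'c"
  hassoc :: "'h \<Rightarrow> 'h \<Rightarrow> 'h \<Rightarrow> 'c"
  hlunit :: "'h \<Rightarrow> 'c"
  hrunit :: "'h \<Rightarrow> 'c"

definition is_cell :: "('o,'v,'h,'c,'x) dblcat_scheme \<Rightarrow> 'c \<Rightarrow> 'h \<Rightarrow> 'h \<Rightarrow> 'v \<Rightarrow> 'v \<Rightarrow> bool" where
  "is_cell D \<phi> J K f g \<longleftrightarrow> \<phi> \<in> Cel D \<and> csrc D \<phi> = J \<and> ctgt D \<phi> = K \<and> cleft D \<phi> = f \<and> cright D \<phi> = g"

definition cell_invertible :: "('o,'v,'h,'c,'x) dblcat_scheme \<Rightarrow> 'c \<Rightarrow> bool" where
  "cell_invertible D \<phi> \<longleftrightarrow> \<phi> \<in> Cel D \<and> (\<exists>\<psi>\<in>Cel D. csrc D \<psi> = ctgt D \<phi> \<and> ctgt D \<psi> = csrc D \<phi> \<and>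
      cvcmp D \<psi> \<phi> = cvid D (csrc D \<phi>) \<and> cvcmp D \<phi> \<psi> = cvid D (ctgt D \<phi>))"

definition cinv :: "('o,'v,'h,'c,'x) dblcat_scheme \<Rightarrow> 'c \<Rightarrow> 'c" where
  "cinv D \<phi> = (SOME \<psi>. \<psi> \<in> Cel D \<and> csrc D \<psi> = ctgt D \<phi> \<and> ctgt D \<psi> = csrc D \<phi> \<and>
      cvcmp D \<psi> \<phi> = cvid D (csrc D \<phi>) \<and> cvcmp D \<phi> \<psi> = cvid D (ctgt D \<phi>))"

definition vertical_category_axioms :: "('o,'v,'h,'c,'x) dblcat_scheme \<Rightarrow> bool" where
  "vertical_category_axioms D \<longleftrightarrow>
    (\<forall>A\<in>Ob D. vid D A \<in> Ver D \<and> vdom D (vid D A) = A \<and> vcod D (vid D A) = A) \<and>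
    (\<forall>f\<in>Ver D. vdom D f \<in> Ob D \<and> vcod D f \<in> Ob D) \<and>
    (\<forall>f\<in>Ver D. \<forall>g\<in>Ver D. vcod D f = vdom D g \<longrightarrow>
        vcmp D g f \<in> Ver D \<and> vdom D (vcmp D g f) = vdom D f \<and> vcod D (vcmp D g f) = vcod D g) \<and>
    (\<forall>f\<in>Ver D. vcmp D f (vid D (vdom D f)) = f \<and> vcmp D (vid D (vcod D f)) f = f) \<and>
    (\<forall>f\<in>Ver D. \<forall>g\<in>Ver D. \<forall>h\<in>Ver D. vcod D f = vdom D g \<longrightarrow> vcod D g = vdom D h \<longrightarrow>
        vcmp D h (vcmp D g f) = vcmp D (vcmp D h g) f)"

definition horizontal_data_axioms :: "('o,'v,'h,'c,'x) dblcat_scheme \<Rightarrow> bool" where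
  "horizontal_data_axioms D \<longleftrightarrow>
    (\<forall>J\<in>Hor D. hsrc D J \<in> Ob D \<and> htgt D J \<in> Ob D) \<and>
    (\<forall>A\<in>Ob D. hunit D A \<in> Hor D \<and> hsrc D (hunit D A) = A \<and> htgt D (hunit D A) = A) \<and>
    (\<forall>J\<in>Hor D. \<forall>K\<in>Hor D. htgt D J = hsrc D K \<longrightarrow>
        hcmp D J K \<in> Hor D \<and> hsrc D (hcmp D J K) = hsrc D J \<and> htgt D (hcmp D J K) = htgt D K)"

definition cell_axioms :: "('o,'v,'h,'c,'x) dblcat_scheme \<Rightarrow> bool" where
  "cell_axioms D \<longleftrightarrow>
    \<comment> \<open>boundaries of cells\<close>
    (\<forall>\<phi>\<in>Cel D. csrc D \<phi> \<in> Hor D \<and> ctgt D \<phi> \<in> Hor D \<and> cleft D \<phi> \<in> Ver D \<and> cright D \<phi> \<in> Ver D \<and>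
        vdom D (cleft D \<phi>) = hsrc D (csrc D \<phi>) \<and> vcod D (cleft D \<phi>) = hsrc D (ctgt D \<phi>) \<and>
        vdom D (cright D \<phi>) = htgt D (csrc D \<phi>) \<and> vcod D (cright D \<phi>) = htgt D (ctgt D \<phi>)) \<and>
    \<comment> \<open>vertical composition of cells\<close>
    (\<forall>\<phi>\<in>Cel D. \<forall>\<psi>\<in>Cel D. ctgt D \<phi> = csrc D \<psi> \<longrightarrow>
        is_cell D (cvcmp D \<psi> \<phi>) (csrc D \<phi>) (ctgt D \<psi>)
          (vcmp D (cleft D \<psi>) (cleft D \<phi>)) (vcmp D (cright D \<psi>) (cright D \<phi>))) \<and>
    (\<forall>J\<in>Hor D. is_cell D (cvid D J) J J (vid D (hsrc D J)) (vid D (htgt D J))) \<and>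
    (\<forall>\<phi>\<in>Cel D. cvcmp D \<phi> (cvid D (csrc D \<phi>)) = \<phi> \<and> cvcmp D (cvid D (ctgt D \<phi>)) \<phi> = \<phi>) \<and>
    (\<forall>\<phi>\<in>Cel D. \<forall>\<psi>\<in>Cel D. \<forall>\<chi>\<in>Cel D. ctgt D \<phi> = csrc D \<psi> \<longrightarrow> ctgt D \<psi> = csrc D \<chi> \<longrightarrow>
        cvcmp D \<chi> (cvcmp D \<psi> \<phi>) = cvcmp D (cvcmp D \<chi> \<psi>) \<phi>) \<and>
    \<comment> \<open>horizontal composition of cells and unit cells\<close>
    (\<forall>\<phi>\<in>Cel D. \<forall>\<psi>\<in>Cel D. cright D \<phi> = cleft D \<psi> \<longrightarrow>
        is_cell D (chcmp D \<phi> \<psi>) (hcmp D (csrc D \<phi>) (csrc D \<psi>)) (hcmp D (ctgt D \<phi>) (ctgt D \<psi>))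
          (cleft D \<phi>) (cright D \<psi>)) \<and>
    (\<forall>f\<in>Ver D. is_cell D (cunit D f) (hunit D (vdom D f)) (hunit D (vcod D f)) f f) \<and>
    \<comment> \<open>functoriality of horizontal composition and of units (interchange)\<close>
    (\<forall>\<phi>\<in>Cel D. \<forall>\<psi>\<in>Cel D. \<forall>\<phi>'\<in>Cel D. \<forall>\<psi>'\<in>Cel D.
        ctgt D \<phi> = csrc D \<psi> \<longrightarrow> ctgt D \<phi>' = csrc D \<psi>' \<longrightarrow>
        cright D \<phi> = cleft D \<phi>' \<longrightarrow> cright D \<psi> = cleft D \<psi>' \<longrightarrow>
        chcmp D (cvcmp D \<psi> \<phi>) (cvcmp D \<psi>' \<phi>') = cvcmp D (chcmp D \<psi> \<psi>') (chcmp D \<phi> \<phi>')) \<and>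
    (\<forall>J\<in>Hor D. \<forall>K\<in>Hor D. htgt D J = hsrc D K \<longrightarrow>
        chcmp D (cvid D J) (cvid D K) = cvid D (hcmp D J K)) \<and>
    (\<forall>f\<in>Ver D. \<forall>g\<in>Ver D. vcod D f = vdom D g \<longrightarrow>
        cunit D (vcmp D g f) = cvcmp D (cunit D g) (cunit D f)) \<and>
    (\<forall>A\<in>Ob D. cunit D (vid D A) = cvid D (hunit D A))"

definition coherence_axioms :: "('o,'v,'h,'c,'x) dblcat_scheme \<Rightarrow> bool" where
  "coherence_axioms D \<longleftrightarrow>
    \<comment> \<open>associator: globular, invertible, natural\<close>
    (\<forall>J\<in>Hor D. \<forall>K\<in>Hor D. \<forall>L\<in>Hor D. htgt D J = hsrc D K \<longrightarrow> htgt D K = hsrc D L \<longrightarrow>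
        is_cell D (hassoc D J K L) (hcmp D (hcmp D J K) L) (hcmp D J (hcmp D K L))
          (vid D (hsrc D J)) (vid D (htgt D L)) \<and> cell_invertible D (hassoc D J K L)) \<and>
    (\<forall>\<phi>\<in>Cel D. \<forall>\<psi>\<in>Cel D. \<forall>\<chi>\<in>Cel D. cright D \<phi> = cleft D \<psi> \<longrightarrow> cright D \<psi> = cleft D \<chi> \<longrightarrow>
        cvcmp D (hassoc D (ctgt D \<phi>) (ctgt D \<psi>) (ctgt D \<chi>)) (chcmp D (chcmp D \<phi> \<psi>) \<chi>)
        = cvcmp D (chcmp D \<phi> (chcmp D \<psi> \<chi>)) (hassoc D (csrc D \<phi>) (csrc D \<psi>) (csrc D \<chi>))) \<and>
    \<comment> \<open>unitors: globular, invertible, natural\<close>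
    (\<forall>J\<in>Hor D. is_cell D (hlunit D J) (hcmp D (hunit D (hsrc D J)) J) J (vid D (hsrc D J)) (vid D (htgt D J))
        \<and> cell_invertible D (hlunit D J)) \<and>
    (\<forall>J\<in>Hor D. is_cell D (hrunit D J) (hcmp D J (hunit D (htgt D J))) J (vid D (hsrc D J)) (vid D (htgt D J))
        \<and> cell_invertible D (hrunit D J)) \<and>
    (\<forall>\<phi>\<in>Cel D. cvcmp D (hlunit D (ctgt D \<phi>)) (chcmp D (cunit D (cleft D \<phi>)) \<phi>)
        = cvcmp D \<phi> (hlunit D (csrc D \<phi>))) \<and>
    (\<forall>\<phi>\<in>Cel D. cvcmp D (hrunit D (ctgt D \<phi>)) (chcmp D \<phi> (cunit D (cright D \<phi>)))
        = cvcmp D \<phi> (hrunit D (csrc D \<phi>))) \<and>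
    \<comment> \<open>pentagon\<close>
    (\<forall>J\<in>Hor D. \<forall>K\<in>Hor D. \<forall>L\<in>Hor D. \<forall>M\<in>Hor D.
        htgt D J = hsrc D K \<longrightarrow> htgt D K = hsrc D L \<longrightarrow> htgt D L = hsrc D M \<longrightarrow>
        cvcmp D (hassoc D J K (hcmp D L M)) (hassoc D (hcmp D J K) L M)
        = cvcmp D (chcmp D (cvid D J) (hassoc D K L M))
            (cvcmp D (hassoc D J (hcmp D K L) M) (chcmp D (hassoc D J K L) (cvid D M)))) \<and>
    \<comment> \<open>triangle\<close>
    (\<forall>J\<in>Hor D. \<forall>K\<in>Hor D. htgt D J = hsrc D K \<longrightarrow>
        cvcmp D (chcmp D (cvid D J) (hlunit D K)) (hassoc D J (hunit D (htgt D J)) K)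
        = chcmp D (hrunit D J) (cvid D K))"

definition double_category :: "('o,'v,'h,'c,'x) dblcat_scheme \<Rightarrow> bool" where
  "double_category D \<longleftrightarrow> vertical_category_axioms D \<and> horizontal_data_axioms D \<and>
     cell_axioms D \<and> coherence_axioms D"

definition cartesian :: "('o,'v,'h,'c,'x) dblcat_scheme \<Rightarrow> 'c \<Rightarrow> bool" where
  "cartesian D \<phi> \<longleftrightarrow> \<phi> \<in> Cel D \<and>
    (\<forall>\<psi>\<in>Cel D. \<forall>h\<in>Ver D. \<forall>k\<in>Ver D.
       vcod D h = vdom D (cleft D \<phi>) \<longrightarrow> vcod D k = vdom D (cright D \<phi>) \<longrightarrow>
       ctgt D \<psi> = ctgt D \<phi> \<longrightarrow> cleft D \<psi> = vcmp D (cleft D \<phi>) h \<longrightarrow> cright D \<psi> = vcmp D (cright D \<phi>) k \<longrightarrow>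
       (\<exists>!\<chi>. is_cell D \<chi> (csrc D \<psi>) (csrc D \<phi>) h k \<and> cvcmp D \<phi> \<chi> = \<psi>))"

definition opcartesian :: "('o,'v,'h,'c,'x) dblcat_scheme \<Rightarrow> 'c \<Rightarrow> bool" where
  "opcartesian D \<phi> \<longleftrightarrow> \<phi> \<in> Cel D \<and>
    (\<forall>\<psi>\<in>Cel D. \<forall>h\<in>Ver D. \<forall>k\<in>Ver D.
       vdom D h = vcod D (cleft D \<phi>) \<longrightarrow> vdom D k = vcod D (cright D \<phi>) \<longrightarrow>
       csrc D \<psi> = csrc D \<phi> \<longrightarrow> cleft D \<psi> = vcmp D h (cleft D \<phi>) \<longrightarrow> cright D \<psi> = vcmp D k (cright D \<phi>) \<longrightarrow>
       (\<exists>!\<chi>. is_cell D \<chi> (ctgt D \<phi>) (ctgt D \<psi>) h k \<and> cvcmp D \<chi> \<phi> = \<psi>))"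

definition companion_cart :: "('o,'v,'h,'c,'x) dblcat_scheme \<Rightarrow> 'v \<Rightarrow> 'h \<Rightarrow> 'c \<Rightarrow> bool" where
  "companion_cart D f K \<chi> \<longleftrightarrow> f \<in> Ver D \<and> K \<in> Hor D \<and>
     is_cell D \<chi> K (hunit D (vcod D f)) f (vid D (vcod D f)) \<and> cartesian D \<chi>"

definition companion_opcart :: "('o,'v,'h,'c,'x) dblcat_scheme \<Rightarrow> 'v \<Rightarrow> 'h \<Rightarrow> 'c \<Rightarrow> bool" where
  "companion_opcart D f K \<eta> \<longleftrightarrow> f \<in> Ver D \<and> K \<in> Hor D \<and>
     is_cell D \<eta> (hunit D (vdom D f)) K (vid D (vdom D f)) f \<and> opcartesian D \<eta>"

text \<open>K is a conjoint g^* = 1_A(id, g) : A -/-> C of g : C -> A, witnessed by a cartesian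
  cell K => 1_A with sides id_A, g.\<close>
definition conjoint_cart :: "('o,'v,'h,'c,'x) dblcat_scheme \<Rightarrow> 'v \<Rightarrow> 'h \<Rightarrow> 'c \<Rightarrow> bool" where
  "conjoint_cart D g K \<chi> \<longleftrightarrow> g \<in> Ver D \<and> K \<in> Hor D \<and>
     is_cell D \<chi> K (hunit D (vcod D g)) (vid D (vcod D g)) g \<and> cartesian D \<chi>"

definition equipment :: "('o,'v,'h,'c,'x) dblcat_scheme \<Rightarrow> bool" where
  "equipment D \<longleftrightarrow> double_category D \<and>
     (\<forall>f\<in>Ver D. (\<exists>K \<chi>. companion_cart D f K \<chi>) \<and> (\<exists>K \<chi>. conjoint_cart D f K \<chi>))"

section \<open>The vertical 2-category V(K) and adjunctions in it\<close>

text \<open>A 2-cell h => k (h, k : X -> Y) of V(K) is a cell 1_X => 1_Y with left side h, right side k.\<close>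
definition vcell :: "('o,'v,'h,'c,'x) dblcat_scheme \<Rightarrow> 'c \<Rightarrow> 'v \<Rightarrow> 'v \<Rightarrow> bool" where
  "vcell D \<alpha> h k \<longleftrightarrow> is_cell D \<alpha> (hunit D (vdom D h)) (hunit D (vcod D h)) h k"

text \<open>Composition (alpha then beta) of 2-cells in V(K): horizontal composite conjugated by unitors.\<close>
definition v2comp :: "('o,'v,'h,'c,'x) dblcat_scheme \<Rightarrow> 'c \<Rightarrow> 'c \<Rightarrow> 'c" where
  "v2comp D \<beta> \<alpha> = cvcmp D (hlunit D (hunit D (vcod D (cleft D \<alpha>))))
      (cvcmp D (chcmp D \<alpha> \<beta>) (cinv D (hlunit D (hunit D (vdom D (cleft D \<alpha>))))))"

text \<open>f -| g in V(K), for f : A -> C and g : C -> A; whiskering is vertical composition with unit cells.\<close>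
definition vadjunction :: "('o,'v,'h,'c,'x) dblcat_scheme \<Rightarrow> 'v \<Rightarrow> 'v \<Rightarrow> bool" where
  "vadjunction D f g \<longleftrightarrow> f \<in> Ver D \<and> g \<in> Ver D \<and> vdom D f = vcod D g \<and> vcod D f = vdom D g \<and>
     (\<exists>\<eta> \<epsilon>. vcell D \<eta> (vid D (vdom D f)) (vcmp D g f) \<and> vcell D \<epsilon> (vcmp D f g) (vid D (vcod D f)) \<and>
        v2comp D (cvcmp D \<epsilon> (cunit D f)) (cvcmp D (cunit D f) \<eta>) = cunit D f \<and>
        v2comp D (cvcmp D (cunit D g) \<epsilon>) (cvcmp D \<eta> (cunit D g)) = cunit D g)"

definition has_left_adjoint :: "('o,'v,'h,'c,'x) dblcat_scheme \<Rightarrow> 'v \<Rightarrow> bool" where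
  "has_left_adjoint D g \<longleftrightarrow> (\<exists>f. vadjunction D f g)"

record ('o,'v,'h,'c) dfun =
  fo :: "'o \<Rightarrow> 'o"
  fv :: "'v \<Rightarrow> 'v"
  fh :: "'h \<Rightarrow> 'h"
  fc :: "'c \<Rightarrow> 'c"
  fcmp :: "'h \<Rightarrow> 'h \<Rightarrow> 'c"

definition normal_lax_dfun :: "('o,'v,'h,'c,'x) dblcat_scheme \<Rightarrow> ('o,'v,'h,'c) dfun \<Rightarrow> bool" where
  "normal_lax_dfun D F \<longleftrightarrow>
    (\<forall>A\<in>Ob D. fo F A \<in> Ob D) \<and>
    (\<forall>f\<in>Ver D. fv F f \<in> Ver D \<and> vdom D (fv F f) = fo F (vdom D f) \<and> vcod D (fv F f) = fo F (vcod D f)) \<and>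
    (\<forall>J\<in>Hor D. fh F J \<in> Hor D \<and> hsrc D (fh F J) = fo F (hsrc D J) \<and> htgt D (fh F J) = fo F (htgt D J)) \<and>
    (\<forall>\<phi>\<in>Cel D. is_cell D (fc F \<phi>) (fh F (csrc D \<phi>)) (fh F (ctgt D \<phi>)) (fv F (cleft D \<phi>)) (fv F (cright D \<phi>))) \<and>
    \<comment> \<open>strict preservation of vertical structure\<close>
    (\<forall>f\<in>Ver D. \<forall>g\<in>Ver D. vcod D f = vdom D g \<longrightarrow> fv F (vcmp D g f) = vcmp D (fv F g) (fv F f)) \<and>
    (\<forall>A\<in>Ob D. fv F (vid D A) = vid D (fo F A)) \<and>
    (\<forall>\<phi>\<in>Cel D. \<forall>\<psi>\<in>Cel D. ctgt D \<phi> = csrc D \<psi> \<longrightarrow> fc F (cvcmp D \<psi> \<phi>) = cvcmp D (fc F \<psi>) (fc F \<phi>)) \<and>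
    (\<forall>J\<in>Hor D. fc F (cvid D J) = cvid D (fh F J)) \<and>
    \<comment> \<open>strict preservation of horizontal units (normality)\<close>
    (\<forall>A\<in>Ob D. fh F (hunit D A) = hunit D (fo F A)) \<and>
    (\<forall>f\<in>Ver D. fc F (cunit D f) = cunit D (fv F f)) \<and>
    \<comment> \<open>compositors: globular, natural, coherent\<close>
    (\<forall>J\<in>Hor D. \<forall>K\<in>Hor D. htgt D J = hsrc D K \<longrightarrow>
        is_cell D (fcmp F J K) (hcmp D (fh F J) (fh F K)) (fh F (hcmp D J K))
          (vid D (fo F (hsrc D J))) (vid D (fo F (htgt D K)))) \<and>
    (\<forall>\<phi>\<in>Cel D. \<forall>\<psi>\<in>Cel D. cright D \<phi> = cleft D \<psi> \<longrightarrow>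
        cvcmp D (fc F (chcmp D \<phi> \<psi>)) (fcmp F (csrc D \<phi>) (csrc D \<psi>))
        = cvcmp D (fcmp F (ctgt D \<phi>) (ctgt D \<psi>)) (chcmp D (fc F \<phi>) (fc F \<psi>))) \<and>
    (\<forall>J\<in>Hor D. \<forall>K\<in>Hor D. \<forall>L\<in>Hor D. htgt D J = hsrc D K \<longrightarrow> htgt D K = hsrc D L \<longrightarrow>
        cvcmp D (fc F (hassoc D J K L)) (cvcmp D (fcmp F (hcmp D J K) L) (chcmp D (fcmp F J K) (cvid D (fh F L))))
        = cvcmp D (fcmp F J (hcmp D K L)) (cvcmp D (chcmp D (cvid D (fh F J)) (fcmp F K L))
            (hassoc D (fh F J) (fh F K) (fh F L)))) \<and>
    (\<forall>J\<in>Hor D. cvcmp D (fc F (hlunit D J)) (fcmp F (hunit D (hsrc D J)) J) = hlunit D (fh F J)) \<and>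
    (\<forall>J\<in>Hor D. cvcmp D (fc F (hrunit D J)) (fcmp F J (hunit D (htgt D J))) = hrunit D (fh F J))"

definition dfun_id :: "('o,'v,'h,'c,'x) dblcat_scheme \<Rightarrow> ('o,'v,'h,'c) dfun" where
  "dfun_id D = \<lparr>fo = id, fv = id, fh = id, fc = id, fcmp = (\<lambda>J K. cvid D (hcmp D J K))\<rparr>"

definition dfun_comp :: "('o,'v,'h,'c,'x) dblcat_scheme \<Rightarrow> ('o,'v,'h,'c) dfun \<Rightarrow> ('o,'v,'h,'c) dfun \<Rightarrow> ('o,'v,'h,'c) dfun" where
  "dfun_comp D G F = \<lparr>fo = fo G \<circ> fo F, fv = fv G \<circ> fv F, fh = fh G \<circ> fh F, fc = fc G \<circ> fc F,
     fcmp = (\<lambda>J K. cvcmp D (fc G (fcmp F J K)) (fcmp G (fh F J) (fh F K)))\<rparr>"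

record ('o,'v,'h,'c) dtrans =
  tob :: "'o \<Rightarrow> 'v"
  thor :: "'h \<Rightarrow> 'c"

definition double_transformation :: "('o,'v,'h,'c,'x) dblcat_scheme \<Rightarrow> ('o,'v,'h,'c) dfun \<Rightarrow> ('o,'v,'h,'c) dfun
    \<Rightarrow> ('o,'v,'h,'c) dtrans \<Rightarrow> bool" where
  "double_transformation D F G \<alpha> \<longleftrightarrow>
    (\<forall>A\<in>Ob D. tob \<alpha> A \<in> Ver D \<and> vdom D (tob \<alpha> A) = fo F A \<and> vcod D (tob \<alpha> A) = fo G A) \<and>
    (\<forall>J\<in>Hor D. is_cell D (thor \<alpha> J) (fh F J) (fh G J) (tob \<alpha> (hsrc D J)) (tob \<alpha> (htgt D J))) \<and>
    (\<forall>f\<in>Ver D. vcmp D (fv G f) (tob \<alpha> (vdom D f)) = vcmp D (tob \<alpha> (vcod D f)) (fv F f)) \<and>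
    (\<forall>\<phi>\<in>Cel D. cvcmp D (thor \<alpha> (ctgt D \<phi>)) (fc F \<phi>) = cvcmp D (fc G \<phi>) (thor \<alpha> (csrc D \<phi>))) \<and>
    (\<forall>J\<in>Hor D. \<forall>K\<in>Hor D. htgt D J = hsrc D K \<longrightarrow>
        cvcmp D (thor \<alpha> (hcmp D J K)) (fcmp F J K) = cvcmp D (fcmp G J K) (chcmp D (thor \<alpha> J) (thor \<alpha> K))) \<and>
    (\<forall>A\<in>Ob D. thor \<alpha> (hunit D A) = cunit D (tob \<alpha> A))"

definition normal_lax_double_monad :: "('o,'v,'h,'c,'x) dblcat_scheme \<Rightarrow> ('o,'v,'h,'c) dfun
    \<Rightarrow> ('o,'v,'h,'c) dtrans \<Rightarrow> ('o,'v,'h,'c) dtrans \<Rightarrow> bool" where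
  "normal_lax_double_monad D T \<mu> \<iota> \<longleftrightarrow>
    double_category D \<and> normal_lax_dfun D T \<and>
    double_transformation D (dfun_comp D T T) T \<mu> \<and>
    double_transformation D (dfun_id D) T \<iota> \<and>
    \<comment> \<open>associativity  mu o T mu = mu o mu T\<close>
    (\<forall>A\<in>Ob D. vcmp D (tob \<mu> A) (fv T (tob \<mu> A)) = vcmp D (tob \<mu> A) (tob \<mu> (fo T A))) \<and>
    (\<forall>J\<in>Hor D. cvcmp D (thor \<mu> J) (fc T (thor \<mu> J)) = cvcmp D (thor \<mu> J) (thor \<mu> (fh T J))) \<and>
    \<comment> \<open>unit laws  mu o iota T = id = mu o T iota\<close>
    (\<forall>A\<in>Ob D. vcmp D (tob \<mu> A) (tob \<iota> (fo T A)) = vid D (fo T A) \<and>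
               vcmp D (tob \<mu> A) (fv T (tob \<iota> A)) = vid D (fo T A)) \<and>
    (\<forall>J\<in>Hor D. cvcmp D (thor \<mu> J) (thor \<iota> (fh T J)) = cvid D (fh T J) \<and>
               cvcmp D (thor \<mu> J) (fc T (thor \<iota> J)) = cvid D (fh T J))"

text \<open>Given J : A -/-> B, an opcartesian cell eta : 1_A => iota_A_* (sides id, iota_A) with
  horizontal target P, and a cartesian cell theta : iota_B_* => 1_TB (sides iota_B, id) with
  horizontal source Q, the cell iota_J_* : J (.) Q => P (.) TJ is the horizontal composite
  eta (.) iota_J (.) theta, adjusted by the unitors.\<close>
definition iota_star :: "('o,'v,'h,'c,'x) dblcat_scheme \<Rightarrow> ('o,'v,'h,'c) dfun \<Rightarrow> ('o,'v,'h,'c) dtrans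
    \<Rightarrow> 'h \<Rightarrow> 'h \<Rightarrow> 'c \<Rightarrow> 'h \<Rightarrow> 'c \<Rightarrow> 'c" where
  "iota_star D T \<iota> J P \<eta> Q \<theta> =
     cvcmp D (hrunit D (hcmp D P (fh T J)))
       (cvcmp D (chcmp D (chcmp D \<eta> (thor \<iota> J)) \<theta>)
          (chcmp D (cinv D (hlunit D J)) (cvid D Q)))"

definition right_BC :: "('o,'v,'h,'c,'x) dblcat_scheme \<Rightarrow> ('o,'v,'h,'c) dfun \<Rightarrow> ('o,'v,'h,'c) dtrans
    \<Rightarrow> 'h \<Rightarrow> bool" where
  "right_BC D T \<iota> J \<longleftrightarrow>
    (\<forall>P \<eta> Q \<theta>. companion_opcart D (tob \<iota> (hsrc D J)) P \<eta> \<longrightarrow>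
                companion_cart D (tob \<iota> (htgt D J)) Q \<theta> \<longrightarrow>
                cell_invertible D (iota_star D T \<iota> J P \<eta> Q \<theta>))"

end

theory Submission
  imports Defs
begin

text \<open>If \<open>f \<stileturn> g\<close> in \<open>V(\<K>)\<close>, the conjoint \<open>K = g\<^sup>*\<close> is also a companion of \<open>f\<close>: the unit of the
  adjunction factors through the cartesian cell of \<open>g\<^sup>*\<close>, the counit pasted beside it gives a cell
  \<open>K \<Rightarrow> 1\<close>, and the companion equations reduce to the triangle identities. For a companion
  \<open>K = f\<^sub>*\<close> both the source \<open>K \<odot> \<iota>\<^sub>C\<^sub>*\<close> and the target \<open>\<iota>\<^sub>A\<^sub>* \<odot> TK\<close> of \<open>\<iota>\<^sub>K\<^sub>*\<close> carry cartesian cells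
  into \<open>1\<^sub>T\<^sub>C\<close> (restrictions of companion counits, \<open>T\<close> preserving companions), with the same
  sides \<open>\<iota>\<^sub>C f = Tf \<iota>\<^sub>A\<close>, and \<open>\<iota>\<^sub>K\<^sub>*\<close> commutes with them; a globular comparison of cartesian cells
  is invertible.\<close>

locale double_cat =
  fixes D :: "('o,'v,'h,'c) dblcat"
  assumes double_category: "double_category D"
begin

abbreviation vc (infixr "\<cdot>" 55) where "\<psi> \<cdot> \<phi> \<equiv> cvcmp D \<psi> \<phi>"
abbreviation hc (infix "\<odot>" 65) where "\<phi> \<odot> \<psi> \<equiv> chcmp D \<phi> \<psi>"
abbreviation hh (infix "\<otimes>" 70) where "J \<otimes> K \<equiv> hcmp D J K"
abbreviation "hu A \<equiv> hunit D A"
abbreviation "idc J \<equiv> cvid D J"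
abbreviation "ucell f \<equiv> cunit D f"
abbreviation "lu J \<equiv> hlunit D J"
abbreviation "ru J \<equiv> hrunit D J"
abbreviation "asc J K L \<equiv> hassoc D J K L"
abbreviation "lui J \<equiv> cinv D (hlunit D J)"
abbreviation "rui J \<equiv> cinv D (hrunit D J)"
abbreviation "globular \<phi> \<equiv>
  cleft D \<phi> = vid D (hsrc D (csrc D \<phi>)) \<and> cright D \<phi> = vid D (htgt D (csrc D \<phi>))"

lemma vertical_category: "vertical_category_axioms D"
  and horizontal_data: "horizontal_data_axioms D"
  and cells: "cell_axioms D"
  and coherence: "coherence_axioms D"
  using double_category unfolding double_category_def by auto

lemma vid_simps[simp]:
  "A \<in> Ob D \<Longrightarrow> vid D A \<in> Ver D" "A \<in> Ob D \<Longrightarrow> vdom D (vid D A) = A" "A \<in> Ob D \<Longrightarrow> vcod D (vid D A) = A"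
  using vertical_category unfolding vertical_category_axioms_def by auto

lemma ver_ob[simp]: "f \<in> Ver D \<Longrightarrow> vdom D f \<in> Ob D" "f \<in> Ver D \<Longrightarrow> vcod D f \<in> Ob D"
  using vertical_category unfolding vertical_category_axioms_def by auto

lemma vcmp_simps[simp]:
  assumes "f \<in> Ver D" "g \<in> Ver D" "vcod D f = vdom D g"
  shows "vcmp D g f \<in> Ver D" "vdom D (vcmp D g f) = vdom D f" "vcod D (vcmp D g f) = vcod D g"
  using vertical_category assms unfolding vertical_category_axioms_def by auto

lemma vcmp_vid[simp]:
  "f \<in> Ver D \<Longrightarrow> vdom D f = A \<Longrightarrow> vcmp D f (vid D A) = f"
  "f \<in> Ver D \<Longrightarrow> vcod D f = A \<Longrightarrow> vcmp D (vid D A) f = f"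
  using vertical_category unfolding vertical_category_axioms_def by auto

lemma vcmp_assoc[simp]:
  "f \<in> Ver D \<Longrightarrow> g \<in> Ver D \<Longrightarrow> h \<in> Ver D \<Longrightarrow> vcod D f = vdom D g \<Longrightarrow> vcod D g = vdom D h \<Longrightarrow>
   vcmp D (vcmp D h g) f = vcmp D h (vcmp D g f)"
  using vertical_category unfolding vertical_category_axioms_def by metis

lemma hor_ob[simp]: "J \<in> Hor D \<Longrightarrow> hsrc D J \<in> Ob D" "J \<in> Hor D \<Longrightarrow> htgt D J \<in> Ob D"
  using horizontal_data unfolding horizontal_data_axioms_def by auto

lemma hunit_simps[simp]:
  "A \<in> Ob D \<Longrightarrow> hu A \<in> Hor D" "A \<in> Ob D \<Longrightarrow> hsrc D (hu A) = A" "A \<in> Ob D \<Longrightarrow> htgt D (hu A) = A"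
  using horizontal_data unfolding horizontal_data_axioms_def by auto

lemma hcmp_simps[simp]:
  assumes "J \<in> Hor D" "K \<in> Hor D" "htgt D J = hsrc D K"
  shows "J \<otimes> K \<in> Hor D" "hsrc D (J \<otimes> K) = hsrc D J" "htgt D (J \<otimes> K) = htgt D K"
  using horizontal_data assms unfolding horizontal_data_axioms_def by auto

lemma cell_boundary[simp]:
  assumes "\<phi> \<in> Cel D"
  shows "csrc D \<phi> \<in> Hor D" "ctgt D \<phi> \<in> Hor D" "cleft D \<phi> \<in> Ver D" "cright D \<phi> \<in> Ver D"
    "vdom D (cleft D \<phi>) = hsrc D (csrc D \<phi>)" "vcod D (cleft D \<phi>) = hsrc D (ctgt D \<phi>)"
    "vdom D (cright D \<phi>) = htgt D (csrc D \<phi>)" "vcod D (cright D \<phi>) = htgt D (ctgt D \<phi>)"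
  using cells assms unfolding cell_axioms_def by auto

lemma is_cellD:
  "is_cell D \<phi> J K f g \<Longrightarrow> \<phi> \<in> Cel D"
  "is_cell D \<phi> J K f g \<Longrightarrow> csrc D \<phi> = J" "is_cell D \<phi> J K f g \<Longrightarrow> ctgt D \<phi> = K"
  "is_cell D \<phi> J K f g \<Longrightarrow> cleft D \<phi> = f" "is_cell D \<phi> J K f g \<Longrightarrow> cright D \<phi> = g"
  unfolding is_cell_def by auto

lemma cvcmp_simps[simp]:
  assumes "\<phi> \<in> Cel D" "\<psi> \<in> Cel D" "ctgt D \<phi> = csrc D \<psi>"
  shows "\<psi> \<cdot> \<phi> \<in> Cel D" "csrc D (\<psi> \<cdot> \<phi>) = csrc D \<phi>" "ctgt D (\<psi> \<cdot> \<phi>) = ctgt D \<psi>"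
    "cleft D (\<psi> \<cdot> \<phi>) = vcmp D (cleft D \<psi>) (cleft D \<phi>)"
    "cright D (\<psi> \<cdot> \<phi>) = vcmp D (cright D \<psi>) (cright D \<phi>)"
  using cells assms unfolding cell_axioms_def is_cell_def by auto

lemma cvid_simps[simp]:
  assumes "J \<in> Hor D"
  shows "idc J \<in> Cel D" "csrc D (idc J) = J" "ctgt D (idc J) = J"
    "cleft D (idc J) = vid D (hsrc D J)" "cright D (idc J) = vid D (htgt D J)"
  using cells assms unfolding cell_axioms_def is_cell_def by auto

lemma cvcmp_cvid[simp]:
  "\<phi> \<in> Cel D \<Longrightarrow> csrc D \<phi> = J \<Longrightarrow> \<phi> \<cdot> idc J = \<phi>"
  "\<phi> \<in> Cel D \<Longrightarrow> ctgt D \<phi> = J \<Longrightarrow> idc J \<cdot> \<phi> = \<phi>"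
  using cells unfolding cell_axioms_def by auto

lemma cvcmp_assoc[simp]:
  "\<phi> \<in> Cel D \<Longrightarrow> \<psi> \<in> Cel D \<Longrightarrow> \<chi> \<in> Cel D \<Longrightarrow> ctgt D \<phi> = csrc D \<psi> \<Longrightarrow> ctgt D \<psi> = csrc D \<chi> \<Longrightarrow>
   (\<chi> \<cdot> \<psi>) \<cdot> \<phi> = \<chi> \<cdot> (\<psi> \<cdot> \<phi>)"
  using cells unfolding cell_axioms_def by metis

lemma cvcmp_reassoc:
  "A \<cdot> B = R \<Longrightarrow> A \<in> Cel D \<Longrightarrow> B \<in> Cel D \<Longrightarrow> Z \<in> Cel D \<Longrightarrow> ctgt D B = csrc D A \<Longrightarrow>
   ctgt D Z = csrc D B \<Longrightarrow> A \<cdot> (B \<cdot> Z) = R \<cdot> Z"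
  by (metis cvcmp_assoc)

lemma chcmp_simps[simp]:
  assumes "\<phi> \<in> Cel D" "\<psi> \<in> Cel D" "cright D \<phi> = cleft D \<psi>"
  shows "\<phi> \<odot> \<psi> \<in> Cel D" "csrc D (\<phi> \<odot> \<psi>) = csrc D \<phi> \<otimes> csrc D \<psi>"
    "ctgt D (\<phi> \<odot> \<psi>) = ctgt D \<phi> \<otimes> ctgt D \<psi>"
    "cleft D (\<phi> \<odot> \<psi>) = cleft D \<phi>" "cright D (\<phi> \<odot> \<psi>) = cright D \<psi>"
  using cells assms unfolding cell_axioms_def is_cell_def by auto

lemma cunit_simps[simp]:
  assumes "f \<in> Ver D"
  shows "ucell f \<in> Cel D" "csrc D (ucell f) = hu (vdom D f)"
    "ctgt D (ucell f) = hu (vcod D f)" "cleft D (ucell f) = f" "cright D (ucell f) = f"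
  using cells assms unfolding cell_axioms_def is_cell_def by auto

lemma interchange:
  "\<phi> \<in> Cel D \<Longrightarrow> \<psi> \<in> Cel D \<Longrightarrow> \<phi>' \<in> Cel D \<Longrightarrow> \<psi>' \<in> Cel D \<Longrightarrow>
   ctgt D \<phi> = csrc D \<psi> \<Longrightarrow> ctgt D \<phi>' = csrc D \<psi>' \<Longrightarrow> cright D \<phi> = cleft D \<phi>' \<Longrightarrow> cright D \<psi> = cleft D \<psi>' \<Longrightarrow>
   (\<psi> \<cdot> \<phi>) \<odot> (\<psi>' \<cdot> \<phi>') = (\<psi> \<odot> \<psi>') \<cdot> (\<phi> \<odot> \<phi>')"
  using cells unfolding cell_axioms_def by metis

lemma chcmp_cvid[simp]:
  "J \<in> Hor D \<Longrightarrow> K \<in> Hor D \<Longrightarrow> htgt D J = hsrc D K \<Longrightarrow> idc J \<odot> idc K = idc (J \<otimes> K)"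
  using cells unfolding cell_axioms_def by metis

lemma cunit_vcmp:
  "f \<in> Ver D \<Longrightarrow> g \<in> Ver D \<Longrightarrow> vcod D f = vdom D g \<Longrightarrow> ucell (vcmp D g f) = ucell g \<cdot> ucell f"
  using cells unfolding cell_axioms_def by metis

lemma cvcmp_cunit[simp]:
  "f \<in> Ver D \<Longrightarrow> g \<in> Ver D \<Longrightarrow> vcod D f = vdom D g \<Longrightarrow> ucell g \<cdot> ucell f = ucell (vcmp D g f)"
  "f \<in> Ver D \<Longrightarrow> g \<in> Ver D \<Longrightarrow> vcod D f = vdom D g \<Longrightarrow> X \<in> Cel D \<Longrightarrow> ctgt D X = hu (vdom D f) \<Longrightarrow>
   ucell g \<cdot> (ucell f \<cdot> X) = ucell (vcmp D g f) \<cdot> X"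
  by (simp_all add: cunit_vcmp)

lemma cunit_vid[simp]: "A \<in> Ob D \<Longrightarrow> ucell (vid D A) = idc (hu A)"
  using cells unfolding cell_axioms_def by metis

lemma invertible_cell: "cell_invertible D \<phi> \<Longrightarrow> \<phi> \<in> Cel D"
  unfolding cell_invertible_def by auto

lemma cinv_props:
  assumes "cell_invertible D \<phi>"
  shows "cinv D \<phi> \<in> Cel D" "csrc D (cinv D \<phi>) = ctgt D \<phi>" "ctgt D (cinv D \<phi>) = csrc D \<phi>"
    "cinv D \<phi> \<cdot> \<phi> = idc (csrc D \<phi>)" "\<phi> \<cdot> cinv D \<phi> = idc (ctgt D \<phi>)"
proof -
  have "\<exists>\<psi>. \<psi> \<in> Cel D \<and> csrc D \<psi> = ctgt D \<phi> \<and> ctgt D \<psi> = csrc D \<phi> \<and>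
      \<psi> \<cdot> \<phi> = idc (csrc D \<phi>) \<and> \<phi> \<cdot> \<psi> = idc (ctgt D \<phi>)"
    using assms unfolding cell_invertible_def by blast
  from someI_ex[OF this] show "cinv D \<phi> \<in> Cel D" "csrc D (cinv D \<phi>) = ctgt D \<phi>"
    "ctgt D (cinv D \<phi>) = csrc D \<phi>" "cinv D \<phi> \<cdot> \<phi> = idc (csrc D \<phi>)" "\<phi> \<cdot> cinv D \<phi> = idc (ctgt D \<phi>)"
    unfolding cinv_def by auto
qed

lemma globular_ends:
  assumes "\<phi> \<in> Cel D" "globular \<phi>"
  shows "hsrc D (ctgt D \<phi>) = hsrc D (csrc D \<phi>)" "htgt D (ctgt D \<phi>) = htgt D (csrc D \<phi>)"
  using cell_boundary[OF assms(1)] assms(2) by (metis hor_ob vid_simps(3))+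

lemma cinv_simps[simp]:
  assumes "cell_invertible D \<phi>" "globular \<phi>"
  shows "cinv D \<phi> \<in> Cel D" "csrc D (cinv D \<phi>) = ctgt D \<phi>" "ctgt D (cinv D \<phi>) = csrc D \<phi>"
    "cleft D (cinv D \<phi>) = cleft D \<phi>" "cright D (cinv D \<phi>) = cright D \<phi>"
proof -
  note inv = cinv_props[OF assms(1)] and \<phi> = invertible_cell[OF assms(1)]
  note ends = globular_ends[OF \<phi> assms(2)]
  show "cinv D \<phi> \<in> Cel D" "csrc D (cinv D \<phi>) = ctgt D \<phi>" "ctgt D (cinv D \<phi>) = csrc D \<phi>"
    using inv by auto
  have "vid D (hsrc D (csrc D \<phi>)) = vcmp D (cleft D (cinv D \<phi>)) (cleft D \<phi>)"
    using cvcmp_simps(4)[of \<phi> "cinv D \<phi>"] inv \<phi> by simp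
  then show "cleft D (cinv D \<phi>) = cleft D \<phi>"
    using inv \<phi> ends assms(2) by simp
  have "vid D (htgt D (csrc D \<phi>)) = vcmp D (cright D (cinv D \<phi>)) (cright D \<phi>)"
    using cvcmp_simps(5)[of \<phi> "cinv D \<phi>"] inv \<phi> by simp
  then show "cright D (cinv D \<phi>) = cright D \<phi>"
    using inv \<phi> ends assms(2) by simp
qed

lemma cinv_cancel[simp]:
  assumes "cell_invertible D \<phi>"
  shows "cinv D \<phi> \<cdot> \<phi> = idc (csrc D \<phi>)" "\<phi> \<cdot> cinv D \<phi> = idc (ctgt D \<phi>)"
    and "X \<in> Cel D \<Longrightarrow> ctgt D X = csrc D \<phi> \<Longrightarrow> cinv D \<phi> \<cdot> (\<phi> \<cdot> X) = X"
    and "X \<in> Cel D \<Longrightarrow> ctgt D X = ctgt D \<phi> \<Longrightarrow> \<phi> \<cdot> (cinv D \<phi> \<cdot> X) = X"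
proof -
  note inv = cinv_props[OF assms] and \<phi> = invertible_cell[OF assms]
  show "cinv D \<phi> \<cdot> \<phi> = idc (csrc D \<phi>)" "\<phi> \<cdot> cinv D \<phi> = idc (ctgt D \<phi>)"
    using inv by auto
  show "X \<in> Cel D \<Longrightarrow> ctgt D X = csrc D \<phi> \<Longrightarrow> cinv D \<phi> \<cdot> (\<phi> \<cdot> X) = X"
    using inv \<phi> cvcmp_assoc[of X \<phi> "cinv D \<phi>"] by simp
  show "X \<in> Cel D \<Longrightarrow> ctgt D X = ctgt D \<phi> \<Longrightarrow> \<phi> \<cdot> (cinv D \<phi> \<cdot> X) = X"
    using inv \<phi> cvcmp_assoc[of X "cinv D \<phi>" \<phi>] by simp
qed

lemma invertible_cancel_right:
  assumes "cell_invertible D \<omega>" "X \<in> Cel D" "Y \<in> Cel D" "csrc D X = ctgt D \<omega>" "csrc D Y = ctgt D \<omega>"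
    and "X \<cdot> \<omega> = Y \<cdot> \<omega>"
  shows "X = Y"
proof -
  note inv = cinv_props[OF assms(1)] and \<omega> = invertible_cell[OF assms(1)]
  have "X = (X \<cdot> \<omega>) \<cdot> cinv D \<omega>" using assms(2,4) inv \<omega> by simp
  also have "\<dots> = (Y \<cdot> \<omega>) \<cdot> cinv D \<omega>" using assms(6) by simp
  also have "\<dots> = Y" using assms(3,5) inv \<omega> by simp
  finally show ?thesis .
qed

lemma invertible_cancel_left:
  assumes "cell_invertible D \<omega>" "X \<in> Cel D" "Y \<in> Cel D" "ctgt D X = csrc D \<omega>" "ctgt D Y = csrc D \<omega>"
    and "\<omega> \<cdot> X = \<omega> \<cdot> Y"
  shows "X = Y"
  by (metis assms cinv_cancel(3))

lemma invertible_cvcmp: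
  assumes "cell_invertible D \<phi>" "cell_invertible D \<psi>" "ctgt D \<phi> = csrc D \<psi>"
  shows "cell_invertible D (\<psi> \<cdot> \<phi>)"
  unfolding cell_invertible_def
  using assms cinv_props[OF assms(1)] cinv_props[OF assms(2)] invertible_cell[OF assms(1)]
    invertible_cell[OF assms(2)]
  by (intro conjI bexI[of _ "cinv D \<phi> \<cdot> cinv D \<psi>"]) simp_all

lemma invertible_cvid[simp]: "J \<in> Hor D \<Longrightarrow> cell_invertible D (idc J)"
  unfolding cell_invertible_def by (intro conjI bexI[of _ "idc J"]) simp_all

lemma invertible_cinv: "cell_invertible D \<phi> \<Longrightarrow> cell_invertible D (cinv D \<phi>)"
  using cinv_props[of \<phi>] invertible_cell[of \<phi>] unfolding cell_invertible_def
  by (intro conjI bexI[of _ \<phi>]) auto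

lemma invertible_chcmp:
  assumes "cell_invertible D \<phi>" "cell_invertible D \<psi>" "globular \<phi>" "globular \<psi>"
    "htgt D (csrc D \<phi>) = hsrc D (csrc D \<psi>)"
  shows "cell_invertible D (\<phi> \<odot> \<psi>)"
proof -
  note \<phi> = invertible_cell[OF assms(1)] and \<psi> = invertible_cell[OF assms(2)]
  note ends = globular_ends[OF \<phi> assms(3)] globular_ends[OF \<psi> assms(4)]
  have "(cinv D \<phi> \<odot> cinv D \<psi>) \<cdot> (\<phi> \<odot> \<psi>) = idc (csrc D \<phi>) \<odot> idc (csrc D \<psi>)"
    using assms \<phi> \<psi> by (subst interchange[symmetric]) simp_all
  moreover have "(\<phi> \<odot> \<psi>) \<cdot> (cinv D \<phi> \<odot> cinv D \<psi>) = idc (ctgt D \<phi>) \<odot> idc (ctgt D \<psi>)"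
    using assms \<phi> \<psi> by (subst interchange[symmetric]) simp_all
  ultimately show ?thesis
    unfolding cell_invertible_def using assms \<phi> \<psi> ends
    by (intro conjI bexI[of _ "cinv D \<phi> \<odot> cinv D \<psi>"]) simp_all
qed

lemma assoc_simps[simp]:
  assumes "J \<in> Hor D" "K \<in> Hor D" "L \<in> Hor D" "htgt D J = hsrc D K" "htgt D K = hsrc D L"
  shows "asc J K L \<in> Cel D" "csrc D (asc J K L) = (J \<otimes> K) \<otimes> L" "ctgt D (asc J K L) = J \<otimes> (K \<otimes> L)"
    "cleft D (asc J K L) = vid D (hsrc D J)" "cright D (asc J K L) = vid D (htgt D L)"
    "cell_invertible D (asc J K L)"
  using coherence assms unfolding coherence_axioms_def is_cell_def by auto

lemma lunit_simps[simp]: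
  assumes "J \<in> Hor D"
  shows "lu J \<in> Cel D" "csrc D (lu J) = hu (hsrc D J) \<otimes> J" "ctgt D (lu J) = J"
    "cleft D (lu J) = vid D (hsrc D J)" "cright D (lu J) = vid D (htgt D J)" "cell_invertible D (lu J)"
  using coherence assms unfolding coherence_axioms_def is_cell_def by auto

lemma runit_simps[simp]:
  assumes "J \<in> Hor D"
  shows "ru J \<in> Cel D" "csrc D (ru J) = J \<otimes> hu (htgt D J)" "ctgt D (ru J) = J"
    "cleft D (ru J) = vid D (hsrc D J)" "cright D (ru J) = vid D (htgt D J)" "cell_invertible D (ru J)"
  using coherence assms unfolding coherence_axioms_def is_cell_def by auto

lemma assoc_nat:
  "\<phi> \<in> Cel D \<Longrightarrow> \<psi> \<in> Cel D \<Longrightarrow> \<chi> \<in> Cel D \<Longrightarrow> cright D \<phi> = cleft D \<psi> \<Longrightarrow> cright D \<psi> = cleft D \<chi> \<Longrightarrow>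
   asc (ctgt D \<phi>) (ctgt D \<psi>) (ctgt D \<chi>) \<cdot> ((\<phi> \<odot> \<psi>) \<odot> \<chi>)
   = (\<phi> \<odot> (\<psi> \<odot> \<chi>)) \<cdot> asc (csrc D \<phi>) (csrc D \<psi>) (csrc D \<chi>)"
  using coherence unfolding coherence_axioms_def by metis

lemma lunit_nat:
  "\<phi> \<in> Cel D \<Longrightarrow> lu (ctgt D \<phi>) \<cdot> (ucell (cleft D \<phi>) \<odot> \<phi>) = \<phi> \<cdot> lu (csrc D \<phi>)"
  using coherence unfolding coherence_axioms_def by metis

lemma runit_nat:
  "\<phi> \<in> Cel D \<Longrightarrow> ru (ctgt D \<phi>) \<cdot> (\<phi> \<odot> ucell (cright D \<phi>)) = \<phi> \<cdot> ru (csrc D \<phi>)"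
  using coherence unfolding coherence_axioms_def by metis

lemma pentagon:
  "J \<in> Hor D \<Longrightarrow> K \<in> Hor D \<Longrightarrow> L \<in> Hor D \<Longrightarrow> M \<in> Hor D \<Longrightarrow>
   htgt D J = hsrc D K \<Longrightarrow> htgt D K = hsrc D L \<Longrightarrow> htgt D L = hsrc D M \<Longrightarrow>
   asc J K (L \<otimes> M) \<cdot> asc (J \<otimes> K) L M
   = (idc J \<odot> asc K L M) \<cdot> (asc J (K \<otimes> L) M \<cdot> (asc J K L \<odot> idc M))"
  using coherence unfolding coherence_axioms_def by metis

lemma triangle:
  "J \<in> Hor D \<Longrightarrow> K \<in> Hor D \<Longrightarrow> htgt D J = hsrc D K \<Longrightarrow>
   (idc J \<odot> lu K) \<cdot> asc J (hu (htgt D J)) K = ru J \<odot> idc K"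
  using coherence unfolding coherence_axioms_def by metis

lemma ucell_hcmp_left_cancel:
  assumes "\<phi> \<in> Cel D" "\<psi> \<in> Cel D" "csrc D \<phi> = csrc D \<psi>" "ctgt D \<phi> = ctgt D \<psi>" "cleft D \<phi> = cleft D \<psi>"
    "ucell (cleft D \<phi>) \<odot> \<phi> = ucell (cleft D \<phi>) \<odot> \<psi>"
  shows "\<phi> = \<psi>"
proof -
  have "\<phi> \<cdot> lu (csrc D \<phi>) = lu (ctgt D \<phi>) \<cdot> (ucell (cleft D \<phi>) \<odot> \<phi>)" by (rule lunit_nat[OF assms(1), symmetric])
  also have "\<dots> = lu (ctgt D \<psi>) \<cdot> (ucell (cleft D \<psi>) \<odot> \<psi>)" by (metis assms(4,5,6))
  also have "\<dots> = \<psi> \<cdot> lu (csrc D \<psi>)" by (rule lunit_nat[OF assms(2)])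
  finally have e: "\<phi> \<cdot> lu (csrc D \<phi>) = \<psi> \<cdot> lu (csrc D \<phi>)" unfolding assms(3) .
  show ?thesis
    by (rule invertible_cancel_right[OF _ assms(1,2) _ _ e]) (use assms(1,2,3) in simp_all)
qed

lemma ucell_hcmp_right_cancel:
  assumes "\<phi> \<in> Cel D" "\<psi> \<in> Cel D" "csrc D \<phi> = csrc D \<psi>" "ctgt D \<phi> = ctgt D \<psi>" "cright D \<phi> = cright D \<psi>"
    "\<phi> \<odot> ucell (cright D \<phi>) = \<psi> \<odot> ucell (cright D \<phi>)"
  shows "\<phi> = \<psi>"
proof -
  have "\<phi> \<cdot> ru (csrc D \<phi>) = ru (ctgt D \<phi>) \<cdot> (\<phi> \<odot> ucell (cright D \<phi>))" by (rule runit_nat[OF assms(1), symmetric])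
  also have "\<dots> = ru (ctgt D \<psi>) \<cdot> (\<psi> \<odot> ucell (cright D \<psi>))" by (metis assms(4,5,6))
  also have "\<dots> = \<psi> \<cdot> ru (csrc D \<psi>)" by (rule runit_nat[OF assms(2)])
  finally have e: "\<phi> \<cdot> ru (csrc D \<phi>) = \<psi> \<cdot> ru (csrc D \<phi>)" unfolding assms(3) .
  show ?thesis
    by (rule invertible_cancel_right[OF _ assms(1,2) _ _ e]) (use assms(1,2,3) in simp_all)
qed

lemma whisker_right_cvcmp:
  "\<phi> \<in> Cel D \<Longrightarrow> \<psi> \<in> Cel D \<Longrightarrow> L \<in> Hor D \<Longrightarrow> ctgt D \<phi> = csrc D \<psi> \<Longrightarrow> cright D \<phi> = vid D (hsrc D L) \<Longrightarrow>
   cright D \<psi> = vid D (hsrc D L) \<Longrightarrow> (\<psi> \<cdot> \<phi>) \<odot> idc L = (\<psi> \<odot> idc L) \<cdot> (\<phi> \<odot> idc L)"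
  using interchange[of \<phi> \<psi> "idc L" "idc L"] by simp

lemma whisker_left_cvcmp:
  "\<phi> \<in> Cel D \<Longrightarrow> \<psi> \<in> Cel D \<Longrightarrow> J \<in> Hor D \<Longrightarrow> ctgt D \<phi> = csrc D \<psi> \<Longrightarrow> cleft D \<phi> = vid D (htgt D J) \<Longrightarrow>
   cleft D \<psi> = vid D (htgt D J) \<Longrightarrow> idc J \<odot> (\<psi> \<cdot> \<phi>) = (idc J \<odot> \<psi>) \<cdot> (idc J \<odot> \<phi>)"
  using interchange[of "idc J" "idc J" \<phi> \<psi>] by simp

lemma lunit_hcmp_whiskered:
  assumes J: "J \<in> Hor D" and L: "L \<in> Hor D" and JL: "htgt D J = hsrc D L"
  defines "I \<equiv> hu (hsrc D J)"
  shows "idc I \<odot> (lu (J \<otimes> L) \<cdot> asc I J L) = idc I \<odot> (lu J \<odot> idc L)"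
proof -
  have I: "I \<in> Hor D" "hsrc D I = hsrc D J" "htgt D I = hsrc D J"
    using J unfolding I_def by auto
  note ax = J L JL I
  define W where "W = asc I (I \<otimes> J) L \<cdot> (asc I I J \<odot> idc L)"
  have W: "cell_invertible D W" "W \<in> Cel D" "ctgt D W = I \<otimes> ((I \<otimes> J) \<otimes> L)"
    unfolding W_def using ax by (auto simp: I_def intro!: invertible_cvcmp invertible_chcmp)
  have "((idc I \<odot> lu (J \<otimes> L)) \<cdot> (idc I \<odot> asc I J L)) \<cdot> W
      = (idc I \<odot> lu (J \<otimes> L)) \<cdot> (asc I I (J \<otimes> L) \<cdot> asc (I \<otimes> I) J L)"
    unfolding W_def using pentagon[of I I J L] ax by (simp add: I_def)
  also have "\<dots> = (ru I \<odot> idc (J \<otimes> L)) \<cdot> asc (I \<otimes> I) J L"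
    using cvcmp_reassoc[OF triangle[of I "J \<otimes> L"]] ax by (simp add: I_def)
  also have "\<dots> = asc I J L \<cdot> ((ru I \<odot> idc J) \<odot> idc L)"
    using assoc_nat[of "ru I" "idc J" "idc L"] ax by (simp add: I_def)
  also have "\<dots> = asc I J L \<cdot> (((idc I \<odot> lu J) \<odot> idc L) \<cdot> (asc I I J \<odot> idc L))"
    using triangle[of I J] whisker_right_cvcmp[of "asc I I J" "idc I \<odot> lu J" L] ax by (simp add: I_def)
  also have "\<dots> = (idc I \<odot> (lu J \<odot> idc L)) \<cdot> W"
    unfolding W_def using cvcmp_reassoc[OF assoc_nat[of "idc I" "lu J" "idc L"]] ax by (simp add: I_def)
  finally have "(idc I \<odot> lu (J \<otimes> L)) \<cdot> (idc I \<odot> asc I J L) = idc I \<odot> (lu J \<odot> idc L)"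
    by (rule invertible_cancel_right[OF W(1), rotated 4]) (use ax W in \<open>simp_all add: I_def\<close>)
  then show ?thesis
    using whisker_left_cvcmp[of "asc I J L" "lu (J \<otimes> L)" I] ax by (simp add: I_def)
qed

text \<open>Kelly's argument: the identity holds after whiskering with the unit, and whiskering with a
  unit cell is faithful.\<close>

lemma lunit_hcmp:
  assumes "J \<in> Hor D" "L \<in> Hor D" "htgt D J = hsrc D L"
  shows "lu (J \<otimes> L) \<cdot> asc (hu (hsrc D J)) J L = lu J \<odot> idc L"
  by (rule ucell_hcmp_left_cancel) (use lunit_hcmp_whiskered[OF assms] assms in simp_all)

lemma runit_hunit[simp]:
  assumes "X \<in> Ob D"
  shows "ru (hu X) = lu (hu X)"
proof -
  let ?I = "hu X"
  note ax = assms hunit_simps[OF assms]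
  have "lu ?I \<cdot> (idc ?I \<odot> lu ?I) = lu ?I \<cdot> lu (?I \<otimes> ?I)"
    using lunit_nat[of "lu ?I"] ax by simp
  then have "idc ?I \<odot> lu ?I = lu (?I \<otimes> ?I)"
    by (rule invertible_cancel_left[rotated 5]) (use ax in simp_all)
  then have "ru ?I \<odot> idc ?I = lu ?I \<odot> idc ?I"
    using triangle[of ?I ?I] lunit_hcmp[of ?I ?I] ax by simp
  then show ?thesis
    using ucell_hcmp_right_cancel[of "ru ?I" "lu ?I"] ax by simp
qed

lemma cartesianD:
  assumes "cartesian D \<phi>" "\<psi> \<in> Cel D" "h \<in> Ver D" "k \<in> Ver D"
    "vcod D h = vdom D (cleft D \<phi>)" "vcod D k = vdom D (cright D \<phi>)" "ctgt D \<psi> = ctgt D \<phi>"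
    "cleft D \<psi> = vcmp D (cleft D \<phi>) h" "cright D \<psi> = vcmp D (cright D \<phi>) k"
  shows "\<exists>!\<xi>. is_cell D \<xi> (csrc D \<psi>) (csrc D \<phi>) h k \<and> \<phi> \<cdot> \<xi> = \<psi>"
  using assms unfolding cartesian_def by blast

lemma cartesian_factor:
  assumes "cartesian D \<phi>" "\<psi> \<in> Cel D" "h \<in> Ver D" "k \<in> Ver D"
    "vcod D h = vdom D (cleft D \<phi>)" "vcod D k = vdom D (cright D \<phi>)" "ctgt D \<psi> = ctgt D \<phi>"
    "cleft D \<psi> = vcmp D (cleft D \<phi>) h" "cright D \<psi> = vcmp D (cright D \<phi>) k"
  shows "\<exists>\<xi>. is_cell D \<xi> (csrc D \<psi>) (csrc D \<phi>) h k \<and> \<phi> \<cdot> \<xi> = \<psi>"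
  using cartesianD[OF assms] by blast

lemma cartesian_factor_unique:
  assumes "cartesian D \<phi>" "is_cell D \<xi>1 S (csrc D \<phi>) h k" "is_cell D \<xi>2 S (csrc D \<phi>) h k"
    "\<phi> \<cdot> \<xi>1 = \<phi> \<cdot> \<xi>2"
  shows "\<xi>1 = \<xi>2"
proof -
  have \<phi>: "\<phi> \<in> Cel D"
    using assms(1) unfolding cartesian_def by blast
  note \<xi>1 = is_cellD[OF assms(2)]
  have "\<exists>!\<xi>. is_cell D \<xi> (csrc D (\<phi> \<cdot> \<xi>1)) (csrc D \<phi>) h k \<and> \<phi> \<cdot> \<xi> = \<phi> \<cdot> \<xi>1"
    by (rule cartesianD[OF assms(1)]) (use \<phi> \<xi>1 cell_boundary[OF \<xi>1(1)] in simp_all)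
  then have "\<exists>\<^sub>\<le>\<^sub>1\<xi>. is_cell D \<xi> S (csrc D \<phi>) h k \<and> \<phi> \<cdot> \<xi> = \<phi> \<cdot> \<xi>1"
    using \<phi> \<xi>1 unfolding ex1_iff_ex_Uniq by simp
  then show ?thesis
    by (rule Uniq_D) (use assms(2-4) in simp_all)
qed

lemma cartesianI:
  assumes "\<phi> \<in> Cel D"
    and ex: "\<And>\<psi> h k. \<psi> \<in> Cel D \<Longrightarrow> h \<in> Ver D \<Longrightarrow> k \<in> Ver D \<Longrightarrow>
       vcod D h = vdom D (cleft D \<phi>) \<Longrightarrow> vcod D k = vdom D (cright D \<phi>) \<Longrightarrow> ctgt D \<psi> = ctgt D \<phi> \<Longrightarrow>
       cleft D \<psi> = vcmp D (cleft D \<phi>) h \<Longrightarrow> cright D \<psi> = vcmp D (cright D \<phi>) k \<Longrightarrow>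
       \<exists>\<xi>. is_cell D \<xi> (csrc D \<psi>) (csrc D \<phi>) h k \<and> \<phi> \<cdot> \<xi> = \<psi>"
    and un: "\<And>\<xi>1 \<xi>2 S h k. is_cell D \<xi>1 S (csrc D \<phi>) h k \<Longrightarrow> is_cell D \<xi>2 S (csrc D \<phi>) h k \<Longrightarrow>
       \<phi> \<cdot> \<xi>1 = \<phi> \<cdot> \<xi>2 \<Longrightarrow> \<xi>1 = \<xi>2"
  shows "cartesian D \<phi>"
  unfolding cartesian_def
proof (intro conjI assms(1) ballI impI)
  fix \<psi> h k assume a: "\<psi> \<in> Cel D" "h \<in> Ver D" "k \<in> Ver D"
       "vcod D h = vdom D (cleft D \<phi>)" "vcod D k = vdom D (cright D \<phi>)" "ctgt D \<psi> = ctgt D \<phi>"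
       "cleft D \<psi> = vcmp D (cleft D \<phi>) h" "cright D \<psi> = vcmp D (cright D \<phi>) k"
  from ex[OF a] obtain \<xi> where x: "is_cell D \<xi> (csrc D \<psi>) (csrc D \<phi>) h k \<and> \<phi> \<cdot> \<xi> = \<psi>" by blast
  show "\<exists>!\<xi>. is_cell D \<xi> (csrc D \<psi>) (csrc D \<phi>) h k \<and> \<phi> \<cdot> \<xi> = \<psi>"
  proof (rule ex1I[of _ \<xi>])
    show "is_cell D \<xi> (csrc D \<psi>) (csrc D \<phi>) h k \<and> \<phi> \<cdot> \<xi> = \<psi>" by (fact x)
    fix y assume y: "is_cell D y (csrc D \<psi>) (csrc D \<phi>) h k \<and> \<phi> \<cdot> y = \<psi>"
    show "y = \<xi>"
      by (rule un[of y "csrc D \<psi>" h k \<xi>]) (use x y in simp_all)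
  qed
qed

lemma invertible_cartesian:
  assumes "cell_invertible D \<omega>" "globular \<omega>"
  shows "cartesian D \<omega>"
proof (rule cartesianI)
  note p = invertible_cell[OF assms(1)]
  show "\<omega> \<in> Cel D" by (fact p)
  fix \<psi> h k assume a: "\<psi> \<in> Cel D" "h \<in> Ver D" "k \<in> Ver D"
       "vcod D h = vdom D (cleft D \<omega>)" "vcod D k = vdom D (cright D \<omega>)" "ctgt D \<psi> = ctgt D \<omega>"
       "cleft D \<psi> = vcmp D (cleft D \<omega>) h" "cright D \<psi> = vcmp D (cright D \<omega>) k"
  show "\<exists>\<xi>. is_cell D \<xi> (csrc D \<psi>) (csrc D \<omega>) h k \<and> \<omega> \<cdot> \<xi> = \<psi>"
    using a assms p unfolding is_cell_def by (intro exI[of _ "cinv D \<omega> \<cdot> \<psi>"]) simp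
next
  fix \<xi>1 \<xi>2 S h k assume a: "is_cell D \<xi>1 S (csrc D \<omega>) h k" "is_cell D \<xi>2 S (csrc D \<omega>) h k"
    "\<omega> \<cdot> \<xi>1 = \<omega> \<cdot> \<xi>2"
  show "\<xi>1 = \<xi>2"
    by (rule invertible_cancel_left[OF assms(1) _ _ _ _ a(3)]) (use a(1,2) in \<open>auto simp: is_cell_def\<close>)
qed

lemma cartesian_cvcmp:
  assumes c1: "cartesian D \<phi>" and c2: "cartesian D \<psi>" and m: "ctgt D \<phi> = csrc D \<psi>"
  shows "cartesian D (\<psi> \<cdot> \<phi>)"
proof -
  have p: "\<phi> \<in> Cel D" "\<psi> \<in> Cel D" using c1 c2 unfolding cartesian_def by auto
  show ?thesis
  proof (rule cartesianI)
    show "\<psi> \<cdot> \<phi> \<in> Cel D" using p m by simp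
    fix \<chi> h k assume a: "\<chi> \<in> Cel D" "h \<in> Ver D" "k \<in> Ver D"
       "vcod D h = vdom D (cleft D (\<psi> \<cdot> \<phi>))" "vcod D k = vdom D (cright D (\<psi> \<cdot> \<phi>))" "ctgt D \<chi> = ctgt D (\<psi> \<cdot> \<phi>)"
       "cleft D \<chi> = vcmp D (cleft D (\<psi> \<cdot> \<phi>)) h" "cright D \<chi> = vcmp D (cright D (\<psi> \<cdot> \<phi>)) k"
    have a': "vcod D h = hsrc D (csrc D \<phi>)" "vcod D k = htgt D (csrc D \<phi>)" "ctgt D \<chi> = ctgt D \<psi>"
      "cleft D \<chi> = vcmp D (cleft D \<psi>) (vcmp D (cleft D \<phi>) h)"
      "cright D \<chi> = vcmp D (cright D \<psi>) (vcmp D (cright D \<phi>) k)"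
      using a p m by simp_all
    obtain \<xi>1 where x1: "is_cell D \<xi>1 (csrc D \<chi>) (csrc D \<psi>) (vcmp D (cleft D \<phi>) h) (vcmp D (cright D \<phi>) k)"
        "\<psi> \<cdot> \<xi>1 = \<chi>"
      using cartesian_factor[OF c2 a(1), of "vcmp D (cleft D \<phi>) h" "vcmp D (cright D \<phi>) k"] a a' p m by auto
    have x1': "\<xi>1 \<in> Cel D" "ctgt D \<xi>1 = ctgt D \<phi>" "cleft D \<xi>1 = vcmp D (cleft D \<phi>) h"
        "cright D \<xi>1 = vcmp D (cright D \<phi>) k" "csrc D \<xi>1 = csrc D \<chi>"
      using x1 m unfolding is_cell_def by auto
    obtain \<xi>2 where x2: "is_cell D \<xi>2 (csrc D \<xi>1) (csrc D \<phi>) h k" "\<phi> \<cdot> \<xi>2 = \<xi>1"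
      using cartesian_factor[OF c1 x1'(1), of h k] a a' p m x1' by auto
    show "\<exists>\<xi>. is_cell D \<xi> (csrc D \<chi>) (csrc D (\<psi> \<cdot> \<phi>)) h k \<and> (\<psi> \<cdot> \<phi>) \<cdot> \<xi> = \<chi>"
      using x1 x2 x1' p m unfolding is_cell_def by (intro exI[of _ \<xi>2]) auto
  next
    fix \<xi>1 \<xi>2 S h k assume a: "is_cell D \<xi>1 S (csrc D (\<psi> \<cdot> \<phi>)) h k" "is_cell D \<xi>2 S (csrc D (\<psi> \<cdot> \<phi>)) h k"
      "(\<psi> \<cdot> \<phi>) \<cdot> \<xi>1 = (\<psi> \<cdot> \<phi>) \<cdot> \<xi>2"
    have a1: "\<xi>1 \<in> Cel D" "csrc D \<xi>1 = S" "ctgt D \<xi>1 = csrc D \<phi>" "cleft D \<xi>1 = h" "cright D \<xi>1 = k"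
      "\<xi>2 \<in> Cel D" "csrc D \<xi>2 = S" "ctgt D \<xi>2 = csrc D \<phi>" "cleft D \<xi>2 = h" "cright D \<xi>2 = k"
      using a p m unfolding is_cell_def by auto
    have "\<psi> \<cdot> (\<phi> \<cdot> \<xi>1) = \<psi> \<cdot> (\<phi> \<cdot> \<xi>2)" using a(3) a1 p m by simp
    hence "\<phi> \<cdot> \<xi>1 = \<phi> \<cdot> \<xi>2"
      by (rule cartesian_factor_unique[OF c2, rotated 2]) (use a1 p m in \<open>simp_all add: is_cell_def\<close>)
    thus "\<xi>1 = \<xi>2" by (rule cartesian_factor_unique[OF c1, rotated 2]) (use a1 in \<open>simp_all add: is_cell_def\<close>)
  qed
qed

lemma cartesian_comparison_invertible:
  assumes c1: "cartesian D c1" and c2: "cartesian D c2"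
    and ph: "is_cell D \<Phi> X Y (vid D (hsrc D X)) (vid D (htgt D X))"
    and sides: "cleft D c1 = cleft D c2" "cright D c1 = cright D c2"
    and eq: "c2 \<cdot> \<Phi> = c1" and cY: "csrc D c2 = Y"
  shows "cell_invertible D \<Phi>"
proof -
  have p: "c1 \<in> Cel D" "c2 \<in> Cel D" using c1 c2 unfolding cartesian_def by auto
  have f: "\<Phi> \<in> Cel D" "csrc D \<Phi> = X" "ctgt D \<Phi> = Y" "cleft D \<Phi> = vid D (hsrc D X)" "cright D \<Phi> = vid D (htgt D X)"
    using ph unfolding is_cell_def by auto
  have XY: "hsrc D X = hsrc D Y" "htgt D X = htgt D Y"
    using f cell_boundary[OF f(1)] by (metis vid_simps(2,3) hor_ob)+
  have cs: "csrc D c1 = X" "ctgt D c1 = ctgt D c2"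
    using cvcmp_simps(2,3)[OF f(1) p(2)] f cY eq by auto
  have Y: "Y \<in> Hor D" "X \<in> Hor D" using f cell_boundary[OF f(1)] by auto
  have "\<exists>\<xi>. is_cell D \<xi> (csrc D c2) (csrc D c1) (vid D (hsrc D Y)) (vid D (htgt D Y)) \<and> c1 \<cdot> \<xi> = c2"
  proof (rule cartesian_factor[OF c1 p(2)])
    show "vid D (hsrc D Y) \<in> Ver D" "vid D (htgt D Y) \<in> Ver D" using Y by simp_all
    show "vcod D (vid D (hsrc D Y)) = vdom D (cleft D c1)" using Y cell_boundary[OF p(1)] cs XY by simp
    show "vcod D (vid D (htgt D Y)) = vdom D (cright D c1)" using Y cell_boundary[OF p(1)] cs XY by simp
    show "ctgt D c2 = ctgt D c1" using cs by simp
    show "cleft D c2 = vcmp D (cleft D c1) (vid D (hsrc D Y))" using Y cell_boundary[OF p(1)] cs XY sides by simp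
    show "cright D c2 = vcmp D (cright D c1) (vid D (htgt D Y))" using Y cell_boundary[OF p(1)] cs XY sides by simp
  qed
  then obtain \<Psi> where ps: "is_cell D \<Psi> Y X (vid D (hsrc D Y)) (vid D (htgt D Y))" "c1 \<cdot> \<Psi> = c2"
    unfolding cs cY by blast
  have ps': "\<Psi> \<in> Cel D" "csrc D \<Psi> = Y" "ctgt D \<Psi> = X" "cleft D \<Psi> = vid D (hsrc D X)" "cright D \<Psi> = vid D (htgt D X)"
    using ps XY unfolding is_cell_def by auto
  have "c1 \<cdot> (\<Psi> \<cdot> \<Phi>) = (c1 \<cdot> \<Psi>) \<cdot> \<Phi>" using cvcmp_assoc[of \<Phi> \<Psi> c1] ps' f p cs by simp
  also have "\<dots> = c1 \<cdot> idc X" using ps(2) eq p cs by simp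
  finally have "c1 \<cdot> (\<Psi> \<cdot> \<Phi>) = c1 \<cdot> idc X" .
  hence e1: "\<Psi> \<cdot> \<Phi> = idc X"
    by (rule cartesian_factor_unique[OF c1, rotated 2]) (use ps' f Y cs XY in \<open>simp_all add: is_cell_def\<close>)
  have "c2 \<cdot> (\<Phi> \<cdot> \<Psi>) = (c2 \<cdot> \<Phi>) \<cdot> \<Psi>" using cvcmp_assoc[of \<Psi> \<Phi> c2] ps' f p cY by simp
  also have "\<dots> = c2 \<cdot> idc Y" using ps(2) eq p cY by simp
  finally have "c2 \<cdot> (\<Phi> \<cdot> \<Psi>) = c2 \<cdot> idc Y" .
  hence e2: "\<Phi> \<cdot> \<Psi> = idc Y"
    by (rule cartesian_factor_unique[OF c2, rotated 2]) (use ps' f Y cY XY in \<open>simp_all add: is_cell_def\<close>)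
  show ?thesis
    unfolding cell_invertible_def using f ps' e1 e2 by (intro conjI f(1) bexI[of _ \<Psi>]) simp_all
qed

lemma opcartesianD:
  assumes "opcartesian D \<phi>" "\<psi> \<in> Cel D" "h \<in> Ver D" "k \<in> Ver D"
    "vdom D h = vcod D (cleft D \<phi>)" "vdom D k = vcod D (cright D \<phi>)" "csrc D \<psi> = csrc D \<phi>"
    "cleft D \<psi> = vcmp D h (cleft D \<phi>)" "cright D \<psi> = vcmp D k (cright D \<phi>)"
  shows "\<exists>!\<xi>. is_cell D \<xi> (ctgt D \<phi>) (ctgt D \<psi>) h k \<and> \<xi> \<cdot> \<phi> = \<psi>"
  using assms unfolding opcartesian_def by blast

lemma opcartesian_factor:
  assumes "opcartesian D \<phi>" "\<psi> \<in> Cel D" "h \<in> Ver D" "k \<in> Ver D"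
    "vdom D h = vcod D (cleft D \<phi>)" "vdom D k = vcod D (cright D \<phi>)" "csrc D \<psi> = csrc D \<phi>"
    "cleft D \<psi> = vcmp D h (cleft D \<phi>)" "cright D \<psi> = vcmp D k (cright D \<phi>)"
  shows "\<exists>\<xi>. is_cell D \<xi> (ctgt D \<phi>) (ctgt D \<psi>) h k \<and> \<xi> \<cdot> \<phi> = \<psi>"
  using opcartesianD[OF assms] by blast

lemma opcartesian_factor_unique:
  assumes "opcartesian D \<phi>" "is_cell D \<xi>1 (ctgt D \<phi>) S h k" "is_cell D \<xi>2 (ctgt D \<phi>) S h k"
    "\<xi>1 \<cdot> \<phi> = \<xi>2 \<cdot> \<phi>"
  shows "\<xi>1 = \<xi>2"
proof -
  have \<phi>: "\<phi> \<in> Cel D"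
    using assms(1) unfolding opcartesian_def by blast
  note \<xi>1 = is_cellD[OF assms(2)]
  have "\<exists>!\<xi>. is_cell D \<xi> (ctgt D \<phi>) (ctgt D (\<xi>1 \<cdot> \<phi>)) h k \<and> \<xi> \<cdot> \<phi> = \<xi>1 \<cdot> \<phi>"
    by (rule opcartesianD[OF assms(1)]) (use \<phi> \<xi>1 cell_boundary[OF \<xi>1(1)] in simp_all)
  then have "\<exists>\<^sub>\<le>\<^sub>1\<xi>. is_cell D \<xi> (ctgt D \<phi>) S h k \<and> \<xi> \<cdot> \<phi> = \<xi>1 \<cdot> \<phi>"
    using \<phi> \<xi>1 unfolding ex1_iff_ex_Uniq by simp
  then show ?thesis
    by (rule Uniq_D) (use assms(2-4) in simp_all)
qed

definition lact :: "'c \<Rightarrow> 'c \<Rightarrow> 'c" where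
  "lact \<alpha> \<phi> = lu (ctgt D \<phi>) \<cdot> ((\<alpha> \<odot> \<phi>) \<cdot> lui (csrc D \<phi>))"

definition ract :: "'c \<Rightarrow> 'c \<Rightarrow> 'c" where
  "ract \<phi> \<alpha> = ru (ctgt D \<phi>) \<cdot> ((\<phi> \<odot> \<alpha>) \<cdot> rui (csrc D \<phi>))"

lemma lact_simps[simp]:
  assumes "\<alpha> \<in> Cel D" "\<phi> \<in> Cel D" "csrc D \<alpha> = hu (hsrc D (csrc D \<phi>))"
    "ctgt D \<alpha> = hu (hsrc D (ctgt D \<phi>))" "cright D \<alpha> = cleft D \<phi>"
  shows "lact \<alpha> \<phi> \<in> Cel D" "csrc D (lact \<alpha> \<phi>) = csrc D \<phi>" "ctgt D (lact \<alpha> \<phi>) = ctgt D \<phi>"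
    "cleft D (lact \<alpha> \<phi>) = cleft D \<alpha>" "cright D (lact \<alpha> \<phi>) = cright D \<phi>"
  using assms cell_boundary[OF assms(1)] cell_boundary[OF assms(2)] unfolding lact_def by simp_all

lemma ract_simps[simp]:
  assumes "\<phi> \<in> Cel D" "\<alpha> \<in> Cel D" "csrc D \<alpha> = hu (htgt D (csrc D \<phi>))"
    "ctgt D \<alpha> = hu (htgt D (ctgt D \<phi>))" "cright D \<phi> = cleft D \<alpha>"
  shows "ract \<phi> \<alpha> \<in> Cel D" "csrc D (ract \<phi> \<alpha>) = csrc D \<phi>" "ctgt D (ract \<phi> \<alpha>) = ctgt D \<phi>"
    "cleft D (ract \<phi> \<alpha>) = cleft D \<phi>" "cright D (ract \<phi> \<alpha>) = cright D \<alpha>"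
  using assms cell_boundary[OF assms(1)] cell_boundary[OF assms(2)] unfolding ract_def by simp_all

lemma lact_lunit:
  assumes "\<alpha> \<in> Cel D" "\<phi> \<in> Cel D" "csrc D \<alpha> = hu (hsrc D (csrc D \<phi>))"
    "ctgt D \<alpha> = hu (hsrc D (ctgt D \<phi>))" "cright D \<alpha> = cleft D \<phi>"
  shows "lact \<alpha> \<phi> \<cdot> lu (csrc D \<phi>) = lu (ctgt D \<phi>) \<cdot> (\<alpha> \<odot> \<phi>)"
  using assms cell_boundary[OF assms(1)] cell_boundary[OF assms(2)] unfolding lact_def by simp

lemma ract_runit:
  assumes "\<phi> \<in> Cel D" "\<alpha> \<in> Cel D" "csrc D \<alpha> = hu (htgt D (csrc D \<phi>))"
    "ctgt D \<alpha> = hu (htgt D (ctgt D \<phi>))" "cright D \<phi> = cleft D \<alpha>"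
  shows "ract \<phi> \<alpha> \<cdot> ru (csrc D \<phi>) = ru (ctgt D \<phi>) \<cdot> (\<phi> \<odot> \<alpha>)"
  using assms cell_boundary[OF assms(1)] cell_boundary[OF assms(2)] unfolding ract_def by simp

lemma lact_ucell: "\<phi> \<in> Cel D \<Longrightarrow> lact (ucell (cleft D \<phi>)) \<phi> = \<phi>"
  using cvcmp_reassoc[OF lunit_nat[of \<phi>], of "lui (csrc D \<phi>)"] unfolding lact_def by simp

lemma ract_ucell: "\<phi> \<in> Cel D \<Longrightarrow> ract \<phi> (ucell (cright D \<phi>)) = \<phi>"
  using cvcmp_reassoc[OF runit_nat[of \<phi>], of "rui (csrc D \<phi>)"] unfolding ract_def by simp

lemma ract_ucell_vertical:
  assumes "\<alpha> \<in> Cel D" "csrc D \<alpha> = hu X" "ctgt D \<alpha> = hu Y" "X \<in> Ob D" "Y \<in> Ob D"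
  shows "ract (ucell (cleft D \<alpha>)) \<alpha> = \<alpha>"
  using cvcmp_reassoc[OF lunit_nat[of \<alpha>], of "lui (hu X)"] assms cell_boundary[OF assms(1)]
  unfolding ract_def by simp

lemma lact_ucell_vertical:
  assumes "\<alpha> \<in> Cel D" "csrc D \<alpha> = hu X" "ctgt D \<alpha> = hu Y" "X \<in> Ob D" "Y \<in> Ob D"
  shows "lact \<alpha> (ucell (cright D \<alpha>)) = \<alpha>"
  using cvcmp_reassoc[OF runit_nat[of \<alpha>], of "rui (hu X)"] assms cell_boundary[OF assms(1)]
  unfolding lact_def by simp

lemma v2comp_ract:
  assumes "\<alpha> \<in> Cel D" "\<beta> \<in> Cel D" "csrc D \<alpha> = hu X" "ctgt D \<alpha> = hu Y"
    "csrc D \<beta> = hu X" "ctgt D \<beta> = hu Y" "cright D \<alpha> = cleft D \<beta>" "X \<in> Ob D" "Y \<in> Ob D"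
  shows "v2comp D \<beta> \<alpha> = ract \<alpha> \<beta>"
  using assms cell_boundary[OF assms(1)] unfolding v2comp_def ract_def by simp

lemma lact_cvcmp:
  assumes "\<alpha> \<in> Cel D" "\<phi> \<in> Cel D" "csrc D \<alpha> = hu (hsrc D (csrc D \<phi>))"
    "ctgt D \<alpha> = hu (hsrc D (ctgt D \<phi>))" "cright D \<alpha> = cleft D \<phi>"
    and "\<alpha>' \<in> Cel D" "\<phi>' \<in> Cel D" "csrc D \<alpha>' = hu (hsrc D (csrc D \<phi>'))"
    "ctgt D \<alpha>' = hu (hsrc D (ctgt D \<phi>'))" "cright D \<alpha>' = cleft D \<phi>'"
    and "csrc D \<phi>' = ctgt D \<phi>"
  shows "lact (\<alpha>' \<cdot> \<alpha>) (\<phi>' \<cdot> \<phi>) = lact \<alpha>' \<phi>' \<cdot> lact \<alpha> \<phi>"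
proof -
  have "(\<alpha>' \<cdot> \<alpha>) \<odot> (\<phi>' \<cdot> \<phi>) = (\<alpha>' \<odot> \<phi>') \<cdot> (\<alpha> \<odot> \<phi>)"
    by (rule interchange) (use assms in simp_all)
  then show ?thesis
    unfolding lact_def using assms cell_boundary[OF assms(1)] cell_boundary[OF assms(2)] by simp
qed

lemma ract_cvcmp:
  assumes "\<phi> \<in> Cel D" "\<alpha> \<in> Cel D" "csrc D \<alpha> = hu (htgt D (csrc D \<phi>))"
    "ctgt D \<alpha> = hu (htgt D (ctgt D \<phi>))" "cright D \<phi> = cleft D \<alpha>"
    and "\<phi>' \<in> Cel D" "\<alpha>' \<in> Cel D" "csrc D \<alpha>' = hu (htgt D (csrc D \<phi>'))"
    "ctgt D \<alpha>' = hu (htgt D (ctgt D \<phi>'))" "cright D \<phi>' = cleft D \<alpha>'"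
    and "csrc D \<phi>' = ctgt D \<phi>"
  shows "ract (\<phi>' \<cdot> \<phi>) (\<alpha>' \<cdot> \<alpha>) = ract \<phi>' \<alpha>' \<cdot> ract \<phi> \<alpha>"
  using assms cell_boundary[OF assms(1)] cell_boundary[OF assms(2)] interchange[of \<phi> \<phi>' \<alpha> \<alpha>']
  unfolding ract_def by simp

lemma lunit_runit_assoc:
  assumes "J \<in> Hor D"
  shows "lu J \<cdot> ((idc (hu (hsrc D J)) \<odot> ru J) \<cdot> asc (hu (hsrc D J)) J (hu (htgt D J)))
    = ru J \<cdot> (lu J \<odot> idc (hu (htgt D J)))"
  using cvcmp_reassoc[OF lunit_nat[of "ru J"], of "asc (hu (hsrc D J)) J (hu (htgt D J))"]
    lunit_hcmp[of J "hu (htgt D J)"] assms by simp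

text \<open>Both sides are compared after precomposing with an invertible unitor cell \<open>W\<close>, where they
  become the same pasting of \<open>\<phi> \<odot> \<alpha> \<odot> \<beta>\<close>.\<close>

lemma ract_ract:
  assumes \<phi>: "\<phi> \<in> Cel D"
    and \<alpha>: "\<alpha> \<in> Cel D" "csrc D \<alpha> = hu (htgt D (csrc D \<phi>))" "ctgt D \<alpha> = hu (htgt D (ctgt D \<phi>))"
      "cright D \<phi> = cleft D \<alpha>"
    and \<beta>: "\<beta> \<in> Cel D" "csrc D \<beta> = csrc D \<alpha>" "ctgt D \<beta> = ctgt D \<alpha>" "cright D \<alpha> = cleft D \<beta>"
  shows "ract (ract \<phi> \<alpha>) \<beta> = ract \<phi> (ract \<alpha> \<beta>)"
proof -
  let ?J = "csrc D \<phi>" and ?L = "ctgt D \<phi>"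
  let ?I = "hu (htgt D (csrc D \<phi>))" and ?I' = "hu (htgt D (ctgt D \<phi>))"
  note ax = \<phi> \<alpha> \<beta> cell_boundary[OF \<phi>] cell_boundary[OF \<alpha>(1)]
  define W where "W = ru ?J \<cdot> (ru ?J \<odot> idc ?I)"
  have W: "cell_invertible D W" "W \<in> Cel D" "ctgt D W = ?J"
    unfolding W_def using ax by (auto intro!: invertible_cvcmp invertible_chcmp)
  have "ract (ract \<phi> \<alpha>) \<beta> \<cdot> W = ru ?L \<cdot> ((ract \<phi> \<alpha> \<odot> \<beta>) \<cdot> (ru ?J \<odot> idc ?I))"
    unfolding W_def using cvcmp_reassoc[OF ract_runit[of "ract \<phi> \<alpha>" \<beta>], of "ru ?J \<odot> idc ?I"] ax by simp
  also have "\<dots> = ru ?L \<cdot> ((ract \<phi> \<alpha> \<cdot> ru ?J) \<odot> \<beta>)"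
    using interchange[of "ru ?J" "ract \<phi> \<alpha>" "idc ?I" \<beta>] ax by simp
  also have "\<dots> = ru ?L \<cdot> ((ru ?L \<cdot> (\<phi> \<odot> \<alpha>)) \<odot> \<beta>)"
    using ract_runit[of \<phi> \<alpha>] ax by simp
  also have "\<dots> = ru ?L \<cdot> ((ru ?L \<odot> idc ?I') \<cdot> ((\<phi> \<odot> \<alpha>) \<odot> \<beta>))"
    using interchange[of "\<phi> \<odot> \<alpha>" "ru ?L" \<beta> "idc ?I'"] ax by simp
  finally have lhs: "ract (ract \<phi> \<alpha>) \<beta> \<cdot> W = ru ?L \<cdot> ((ru ?L \<odot> idc ?I') \<cdot> ((\<phi> \<odot> \<alpha>) \<odot> \<beta>))" .
  have "ract \<phi> (ract \<alpha> \<beta>) \<cdot> W = ru ?L \<cdot> ((\<phi> \<odot> ract \<alpha> \<beta>) \<cdot> (ru ?J \<odot> idc ?I))"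
    unfolding W_def using cvcmp_reassoc[OF ract_runit[of \<phi> "ract \<alpha> \<beta>"], of "ru ?J \<odot> idc ?I"] ax by simp
  also have "\<dots> = ru ?L \<cdot> ((\<phi> \<odot> ract \<alpha> \<beta>) \<cdot> ((idc ?J \<odot> lu ?I) \<cdot> asc ?J ?I ?I))"
    using triangle[of ?J ?I] ax by simp
  also have "\<dots> = ru ?L \<cdot> ((\<phi> \<odot> (ract \<alpha> \<beta> \<cdot> ru ?I)) \<cdot> asc ?J ?I ?I)"
    using interchange[of "idc ?J" \<phi> "lu ?I" "ract \<alpha> \<beta>"] ax by simp
  also have "\<dots> = ru ?L \<cdot> ((\<phi> \<odot> (ru ?I' \<cdot> (\<alpha> \<odot> \<beta>))) \<cdot> asc ?J ?I ?I)"
    using ract_runit[of \<alpha> \<beta>] ax by simp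
  also have "\<dots> = ru ?L \<cdot> ((idc ?L \<odot> lu ?I') \<cdot> ((\<phi> \<odot> (\<alpha> \<odot> \<beta>)) \<cdot> asc ?J ?I ?I))"
    using interchange[of \<phi> "idc ?L" "\<alpha> \<odot> \<beta>" "ru ?I'"] ax by simp
  also have "\<dots> = ru ?L \<cdot> ((idc ?L \<odot> lu ?I') \<cdot> (asc ?L ?I' ?I' \<cdot> ((\<phi> \<odot> \<alpha>) \<odot> \<beta>)))"
    using assoc_nat[of \<phi> \<alpha> \<beta>] ax by simp
  also have "\<dots> = ru ?L \<cdot> ((ru ?L \<odot> idc ?I') \<cdot> ((\<phi> \<odot> \<alpha>) \<odot> \<beta>))"
    using cvcmp_reassoc[OF triangle[of ?L ?I'], of "(\<phi> \<odot> \<alpha>) \<odot> \<beta>"] ax by simp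
  finally have rhs: "ract \<phi> (ract \<alpha> \<beta>) \<cdot> W = ru ?L \<cdot> ((ru ?L \<odot> idc ?I') \<cdot> ((\<phi> \<odot> \<alpha>) \<odot> \<beta>))" .
  show ?thesis
    by (rule invertible_cancel_right[OF W(1) _ _ _ _ lhs[folded rhs]]) (use ax W in simp_all)
qed

lemma lact_ract:
  assumes \<phi>: "\<phi> \<in> Cel D"
    and \<alpha>: "\<alpha> \<in> Cel D" "csrc D \<alpha> = hu (hsrc D (csrc D \<phi>))" "ctgt D \<alpha> = hu (hsrc D (ctgt D \<phi>))"
      "cright D \<alpha> = cleft D \<phi>"
    and \<beta>: "\<beta> \<in> Cel D" "csrc D \<beta> = hu (htgt D (csrc D \<phi>))" "ctgt D \<beta> = hu (htgt D (ctgt D \<phi>))"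
      "cright D \<phi> = cleft D \<beta>"
  shows "lact \<alpha> (ract \<phi> \<beta>) = ract (lact \<alpha> \<phi>) \<beta>"
proof -
  let ?J = "csrc D \<phi>" and ?L = "ctgt D \<phi>"
  let ?A = "hu (hsrc D (csrc D \<phi>))" and ?A' = "hu (hsrc D (ctgt D \<phi>))"
  let ?B = "hu (htgt D (csrc D \<phi>))" and ?B' = "hu (htgt D (ctgt D \<phi>))"
  note ax = \<phi> \<alpha> \<beta> cell_boundary[OF \<phi>] cell_boundary[OF \<alpha>(1)] cell_boundary[OF \<beta>(1)]
  define W where "W = ru ?J \<cdot> (lu ?J \<odot> idc ?B)"
  have W: "cell_invertible D W" "W \<in> Cel D" "ctgt D W = ?J"
    unfolding W_def using ax by (auto intro!: invertible_cvcmp invertible_chcmp)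
  have "lact \<alpha> (ract \<phi> \<beta>) \<cdot> W = lact \<alpha> (ract \<phi> \<beta>) \<cdot> (lu ?J \<cdot> ((idc ?A \<odot> ru ?J) \<cdot> asc ?A ?J ?B))"
    unfolding W_def using lunit_runit_assoc[of ?J] ax by simp
  also have "\<dots> = lu ?L \<cdot> ((\<alpha> \<odot> ract \<phi> \<beta>) \<cdot> ((idc ?A \<odot> ru ?J) \<cdot> asc ?A ?J ?B))"
    using cvcmp_reassoc[OF lact_lunit[of \<alpha> "ract \<phi> \<beta>"], of "(idc ?A \<odot> ru ?J) \<cdot> asc ?A ?J ?B"] ax
    by simp
  also have "\<dots> = lu ?L \<cdot> ((\<alpha> \<odot> (ract \<phi> \<beta> \<cdot> ru ?J)) \<cdot> asc ?A ?J ?B)"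
    using interchange[of "idc ?A" \<alpha> "ru ?J" "ract \<phi> \<beta>"] ax by simp
  also have "\<dots> = lu ?L \<cdot> ((\<alpha> \<odot> (ru ?L \<cdot> (\<phi> \<odot> \<beta>))) \<cdot> asc ?A ?J ?B)"
    using ract_runit[of \<phi> \<beta>] ax by simp
  also have "\<dots> = lu ?L \<cdot> ((idc ?A' \<odot> ru ?L) \<cdot> ((\<alpha> \<odot> (\<phi> \<odot> \<beta>)) \<cdot> asc ?A ?J ?B))"
    using interchange[of \<alpha> "idc ?A'" "\<phi> \<odot> \<beta>" "ru ?L"] ax by simp
  also have "\<dots> = lu ?L \<cdot> ((idc ?A' \<odot> ru ?L) \<cdot> (asc ?A' ?L ?B' \<cdot> ((\<alpha> \<odot> \<phi>) \<odot> \<beta>)))"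
    using assoc_nat[of \<alpha> \<phi> \<beta>] ax by simp
  also have "\<dots> = ru ?L \<cdot> ((lu ?L \<odot> idc ?B') \<cdot> ((\<alpha> \<odot> \<phi>) \<odot> \<beta>))"
    using cvcmp_reassoc[OF lunit_runit_assoc[of ?L], of "(\<alpha> \<odot> \<phi>) \<odot> \<beta>"] ax by simp
  finally have lhs: "lact \<alpha> (ract \<phi> \<beta>) \<cdot> W = ru ?L \<cdot> ((lu ?L \<odot> idc ?B') \<cdot> ((\<alpha> \<odot> \<phi>) \<odot> \<beta>))" .
  have "ract (lact \<alpha> \<phi>) \<beta> \<cdot> W = ru ?L \<cdot> ((lact \<alpha> \<phi> \<odot> \<beta>) \<cdot> (lu ?J \<odot> idc ?B))"
    unfolding W_def using cvcmp_reassoc[OF ract_runit[of "lact \<alpha> \<phi>" \<beta>], of "lu ?J \<odot> idc ?B"] ax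
    by simp
  also have "\<dots> = ru ?L \<cdot> ((lact \<alpha> \<phi> \<cdot> lu ?J) \<odot> \<beta>)"
    using interchange[of "lu ?J" "lact \<alpha> \<phi>" "idc ?B" \<beta>] ax by simp
  also have "\<dots> = ru ?L \<cdot> ((lu ?L \<cdot> (\<alpha> \<odot> \<phi>)) \<odot> \<beta>)"
    using lact_lunit[of \<alpha> \<phi>] ax by simp
  also have "\<dots> = ru ?L \<cdot> ((lu ?L \<odot> idc ?B') \<cdot> ((\<alpha> \<odot> \<phi>) \<odot> \<beta>))"
    using interchange[of "\<alpha> \<odot> \<phi>" "lu ?L" \<beta> "idc ?B'"] ax by simp
  finally have rhs: "ract (lact \<alpha> \<phi>) \<beta> \<cdot> W = ru ?L \<cdot> ((lu ?L \<odot> idc ?B') \<cdot> ((\<alpha> \<odot> \<phi>) \<odot> \<beta>))" .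
  show ?thesis
    by (rule invertible_cancel_right[OF W(1) _ _ _ _ lhs[folded rhs]]) (use ax W in simp_all)
qed

definition companion_pair :: "'h \<Rightarrow> 'v \<Rightarrow> 'c \<Rightarrow> 'c \<Rightarrow> bool" where
  "companion_pair M h e \<sigma> \<longleftrightarrow> h \<in> Ver D \<and> M \<in> Hor D \<and> hsrc D M = vdom D h \<and> htgt D M = vcod D h \<and>
     is_cell D \<sigma> M (hu (vcod D h)) h (vid D (vcod D h)) \<and>
     is_cell D e (hu (vdom D h)) M (vid D (vdom D h)) h \<and>
     \<sigma> \<cdot> e = ucell h \<and> ru M \<cdot> (e \<odot> \<sigma>) = lu M"

lemma companion_pairD:
  assumes "companion_pair M h e \<sigma>"
  shows "h \<in> Ver D" "M \<in> Hor D" "hsrc D M = vdom D h" "htgt D M = vcod D h"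
    "\<sigma> \<in> Cel D" "csrc D \<sigma> = M" "ctgt D \<sigma> = hu (vcod D h)" "cleft D \<sigma> = h" "cright D \<sigma> = vid D (vcod D h)"
    "e \<in> Cel D" "csrc D e = hu (vdom D h)" "ctgt D e = M" "cleft D e = vid D (vdom D h)" "cright D e = h"
    "\<sigma> \<cdot> e = ucell h" "ru M \<cdot> (e \<odot> \<sigma>) = lu M"
  using assms unfolding companion_pair_def is_cell_def by auto

lemma companion_unit_restriction:
  assumes cp: "companion_pair M h e \<sigma>" and N: "N \<in> Hor D" "hsrc D N = vcod D h"
  shows "e \<odot> (lu N \<cdot> (\<sigma> \<odot> idc N)) = lu (M \<otimes> N)"
proof -
  let ?A = "hu (vdom D h)" and ?B = "hu (vcod D h)"
  note c = companion_pairD[OF cp]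
  note ax = c(1-14) N
  have "(e \<odot> (lu N \<cdot> (\<sigma> \<odot> idc N))) \<cdot> asc ?A M N = (idc M \<odot> lu N) \<cdot> ((e \<odot> (\<sigma> \<odot> idc N)) \<cdot> asc ?A M N)"
    using interchange[of e "idc M" "\<sigma> \<odot> idc N" "lu N"] ax by simp
  also have "\<dots> = (idc M \<odot> lu N) \<cdot> (asc M ?B N \<cdot> ((e \<odot> \<sigma>) \<odot> idc N))"
    using assoc_nat[of e \<sigma> "idc N"] ax by simp
  also have "\<dots> = (ru M \<odot> idc N) \<cdot> ((e \<odot> \<sigma>) \<odot> idc N)"
    using cvcmp_reassoc[OF triangle[of M N], of "(e \<odot> \<sigma>) \<odot> idc N"] ax by simp
  also have "\<dots> = (ru M \<cdot> (e \<odot> \<sigma>)) \<odot> idc N"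
    using whisker_right_cvcmp[of "e \<odot> \<sigma>" "ru M" N] ax by simp
  also have "\<dots> = lu (M \<otimes> N) \<cdot> asc ?A M N"
    using lunit_hcmp[of M N] c(16) ax by simp
  finally show ?thesis
    by (rule invertible_cancel_right[rotated 5]) (use ax in simp_all)
qed

lemma companion_restriction_determines:
  assumes cp: "companion_pair M h e \<sigma>" and N: "N \<in> Hor D" "hsrc D N = vcod D h"
    and \<xi>: "is_cell D \<xi> S (M \<otimes> N) a k"
  shows "\<xi> = ((e \<cdot> ucell a) \<odot> ((lu N \<cdot> (\<sigma> \<odot> idc N)) \<cdot> \<xi>)) \<cdot> lui S"
proof -
  note c = companion_pairD[OF cp]
  have x: "\<xi> \<in> Cel D" "csrc D \<xi> = S" "ctgt D \<xi> = M \<otimes> N" "cleft D \<xi> = a" "cright D \<xi> = k"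
    using \<xi> unfolding is_cell_def by auto
  have a: "a \<in> Ver D" "vcod D a = vdom D h" "vdom D a = hsrc D S" "S \<in> Hor D"
    using cell_boundary[OF x(1)] x c N by auto
  note ax = c(1-14) N x a
  have "((e \<cdot> ucell a) \<odot> ((lu N \<cdot> (\<sigma> \<odot> idc N)) \<cdot> \<xi>)) \<cdot> lui S
      = ((e \<odot> (lu N \<cdot> (\<sigma> \<odot> idc N))) \<cdot> (ucell a \<odot> \<xi>)) \<cdot> lui S"
    using interchange[of "ucell a" e \<xi> "lu N \<cdot> (\<sigma> \<odot> idc N)"] ax by simp
  also have "\<dots> = (lu (M \<otimes> N) \<cdot> (ucell a \<odot> \<xi>)) \<cdot> lui S"
    using companion_unit_restriction[OF cp N] by simp
  also have "\<dots> = \<xi>"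
    using lunit_nat[OF x(1)] ax by simp
  finally show ?thesis by simp
qed

lemma companion_restriction_cartesian:
  assumes cp: "companion_pair M h e \<sigma>" and N: "N \<in> Hor D" "hsrc D N = vcod D h"
  shows "cartesian D (lu N \<cdot> (\<sigma> \<odot> idc N))"
proof -
  define r where "r = lu N \<cdot> (\<sigma> \<odot> idc N)"
  note c = companion_pairD[OF cp]
  note ax = c(1-16) N
  have r: "r \<in> Cel D" "csrc D r = M \<otimes> N" "ctgt D r = N" "cleft D r = h" "cright D r = vid D (htgt D N)"
    unfolding r_def using ax by simp_all
  show ?thesis unfolding r_def[symmetric]
  proof (rule cartesianI)
    show "r \<in> Cel D" by (fact r(1))
    fix \<psi> a k assume as: "\<psi> \<in> Cel D" "a \<in> Ver D" "k \<in> Ver D"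
       "vcod D a = vdom D (cleft D r)" "vcod D k = vdom D (cright D r)" "ctgt D \<psi> = ctgt D r"
       "cleft D \<psi> = vcmp D (cleft D r) a" "cright D \<psi> = vcmp D (cright D r) k"
    define X where "X = csrc D \<psi>"
    have as': "vcod D a = vdom D h" "vcod D k = htgt D N" "ctgt D \<psi> = N" "cleft D \<psi> = vcmp D h a"
      "cright D \<psi> = k" "X \<in> Hor D" "hsrc D X = vdom D a" "htgt D X = vdom D k"
      using as r ax cell_boundary[OF as(1)] unfolding X_def by auto
    note ax = ax as(1-3) as' X_def[symmetric]
    have "\<sigma> \<cdot> (e \<cdot> ucell a) = ucell (vcmp D h a)"
      using cvcmp_assoc[of "ucell a" e \<sigma>] ax by simp
    then have restrict: "(\<sigma> \<odot> idc N) \<cdot> ((e \<cdot> ucell a) \<odot> \<psi>) = ucell (vcmp D h a) \<odot> \<psi>"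
      using interchange[of "e \<cdot> ucell a" \<sigma> \<psi> "idc N"] ax by simp
    have "r \<cdot> (((e \<cdot> ucell a) \<odot> \<psi>) \<cdot> lui X) = lu N \<cdot> ((ucell (vcmp D h a) \<odot> \<psi>) \<cdot> lui X)"
      using cvcmp_reassoc[OF restrict, of "lui X"] ax unfolding r_def by simp
    also have "\<dots> = \<psi>"
      using cvcmp_reassoc[OF lunit_nat[OF as(1)], of "lui X"] ax by simp
    finally have "r \<cdot> (((e \<cdot> ucell a) \<odot> \<psi>) \<cdot> lui X) = \<psi>" .
    moreover have "is_cell D (((e \<cdot> ucell a) \<odot> \<psi>) \<cdot> lui X) X (M \<otimes> N) a k"
      unfolding is_cell_def using ax by simp
    ultimately show "\<exists>\<xi>. is_cell D \<xi> (csrc D \<psi>) (csrc D r) a k \<and> r \<cdot> \<xi> = \<psi>"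
      using r ax by auto
  next
    fix \<xi>1 \<xi>2 S a k assume "is_cell D \<xi>1 S (csrc D r) a k" "is_cell D \<xi>2 S (csrc D r) a k"
      "r \<cdot> \<xi>1 = r \<cdot> \<xi>2"
    then show "\<xi>1 = \<xi>2"
      using companion_restriction_determines[OF cp N, of \<xi>1 S a k]
        companion_restriction_determines[OF cp N, of \<xi>2 S a k] r unfolding r_def by simp
  qed
qed

lemma companion_counit_cartesian:
  assumes cp: "companion_pair M h e \<sigma>"
  shows "cartesian D \<sigma>"
proof -
  note ax = companion_pairD[OF cp]
  have "cartesian D ((lu (hu (vcod D h)) \<cdot> (\<sigma> \<odot> idc (hu (vcod D h)))) \<cdot> rui M)"
    by (rule cartesian_cvcmp[OF invertible_cartesian companion_restriction_cartesian[OF cp]])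
      (use ax in \<open>simp_all add: invertible_cinv\<close>)
  moreover have "lu (hu (vcod D h)) \<cdot> (\<sigma> \<odot> idc (hu (vcod D h))) = \<sigma> \<cdot> ru M"
    using runit_nat[of \<sigma>] ax by simp
  ultimately show ?thesis
    using ax by simp
qed

lemma opcartesian_unit_zigzag:
  assumes \<eta>: "opcartesian D \<eta>" "is_cell D \<eta> (hu (vdom D f)) P (vid D (vdom D f)) f"
    and \<theta>: "is_cell D \<theta> P (hu (vcod D f)) f (vid D (vcod D f))" "\<theta> \<cdot> \<eta> = ucell f"
  shows "ru P \<cdot> (\<eta> \<odot> \<theta>) = lu P"
proof -
  let ?A = "vdom D f"
  note \<eta>' = is_cellD[OF \<eta>(2)] and \<theta>' = is_cellD[OF \<theta>(1)]
  have ob: "f \<in> Ver D" "P \<in> Hor D" "hsrc D P = ?A" "htgt D P = vcod D f"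
    using cell_boundary[OF \<eta>'(1)] \<eta>' by auto
  note ax = \<eta>' \<theta>' ob
  have "lu P \<cdot> ((idc (hu ?A) \<odot> \<eta>) \<cdot> lui (hu ?A)) = \<eta>"
    using cvcmp_reassoc[OF lunit_nat[OF \<eta>'(1)], of "lui (hu ?A)"] ax by simp
  then have "lui P \<cdot> \<eta> = (idc (hu ?A) \<odot> \<eta>) \<cdot> lui (hu ?A)"
    using cinv_cancel(3)[of "lu P" "(idc (hu ?A) \<odot> \<eta>) \<cdot> lui (hu ?A)"] ax by simp
  then have "(ru P \<cdot> ((\<eta> \<odot> \<theta>) \<cdot> lui P)) \<cdot> \<eta>
      = ru P \<cdot> (((\<eta> \<odot> \<theta>) \<cdot> (idc (hu ?A) \<odot> \<eta>)) \<cdot> lui (hu ?A))"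
    using ax by simp
  also have "\<dots> = ru P \<cdot> ((\<eta> \<odot> ucell f) \<cdot> lui (hu ?A))"
    using interchange[of "idc (hu ?A)" \<eta> \<eta> \<theta>] \<theta>(2) ax by simp
  also have "\<dots> = idc P \<cdot> \<eta>"
    using cvcmp_reassoc[OF runit_nat[OF \<eta>'(1)], of "lui (hu ?A)"] ax by simp
  finally have "ru P \<cdot> ((\<eta> \<odot> \<theta>) \<cdot> lui P) = idc P"
    by (rule opcartesian_factor_unique[OF \<eta>(1), rotated 2]) (use ax in \<open>simp_all add: is_cell_def\<close>)
  from cvcmp_reassoc[OF this, of "lu P"] show ?thesis
    using ax by simp
qed

lemma companion_opcart_pair:
  assumes "companion_opcart D f P \<eta>"
  shows "\<exists>\<theta>. companion_pair P f \<eta> \<theta>"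
proof -
  have \<eta>: "opcartesian D \<eta>" "is_cell D \<eta> (hu (vdom D f)) P (vid D (vdom D f)) f" "f \<in> Ver D"
    using assms unfolding companion_opcart_def by auto
  note ax = is_cellD[OF \<eta>(2)] \<eta>(3) cell_boundary[of \<eta>]
  have "\<exists>\<theta>. is_cell D \<theta> (ctgt D \<eta>) (ctgt D (ucell f)) f (vid D (vcod D f)) \<and> \<theta> \<cdot> \<eta> = ucell f"
    by (rule opcartesian_factor[OF \<eta>(1)]) (use ax in simp_all)
  then obtain \<theta> where \<theta>: "is_cell D \<theta> P (hu (vcod D f)) f (vid D (vcod D f))" "\<theta> \<cdot> \<eta> = ucell f"
    using ax by auto
  then show ?thesis
    using opcartesian_unit_zigzag[OF \<eta>(1,2) \<theta>] assms ax
    unfolding companion_pair_def companion_opcart_def by auto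
qed

subsection \<open>The conjoint of a right adjoint is a companion of the left adjoint\<close>

context
  fixes f g u \<epsilon> K \<chi>
  assumes fg: "f \<in> Ver D" "g \<in> Ver D" "vdom D f = vcod D g" "vcod D f = vdom D g"
    and unit: "vcell D u (vid D (vdom D f)) (vcmp D g f)"
    and counit: "vcell D \<epsilon> (vcmp D f g) (vid D (vcod D f))"
    and zig: "v2comp D (\<epsilon> \<cdot> ucell f) (ucell f \<cdot> u) = ucell f"
    and zag: "v2comp D (ucell g \<cdot> \<epsilon>) (u \<cdot> ucell g) = ucell g"
    and conjoint: "conjoint_cart D g K \<chi>"
begin

lemma adjunction_boundaries:
  "vdom D g = vcod D f" "vcod D g = vdom D f" "vdom D f \<in> Ob D" "vcod D f \<in> Ob D"
  "u \<in> Cel D" "csrc D u = hu (vdom D f)" "ctgt D u = hu (vdom D f)" "cleft D u = vid D (vdom D f)"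
  "cright D u = vcmp D g f"
  "\<epsilon> \<in> Cel D" "csrc D \<epsilon> = hu (vcod D f)" "ctgt D \<epsilon> = hu (vcod D f)" "cleft D \<epsilon> = vcmp D f g"
  "cright D \<epsilon> = vid D (vcod D f)"
  "K \<in> Hor D" "hsrc D K = vdom D f" "htgt D K = vcod D f"
  "\<chi> \<in> Cel D" "csrc D \<chi> = K" "ctgt D \<chi> = hu (vdom D f)" "cleft D \<chi> = vid D (vdom D f)" "cright D \<chi> = g"
  using fg unit counit conjoint cell_boundary[of \<chi>]
  unfolding vcell_def conjoint_cart_def is_cell_def by auto

lemma conjoint_unit_factor:
  obtains e where "is_cell D e (hu (vdom D f)) K (vid D (vdom D f)) f" "\<chi> \<cdot> e = u"
proof -
  note ax = fg(1,2) adjunction_boundaries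
  have "\<exists>e. is_cell D e (csrc D u) (csrc D \<chi>) (vid D (vdom D f)) f \<and> \<chi> \<cdot> e = u"
    by (rule cartesian_factor) (use conjoint ax in \<open>simp_all add: conjoint_cart_def\<close>)
  then show thesis using that ax by auto
qed

lemma conjoint_counit_unit:
  assumes e: "is_cell D e (hu (vdom D f)) K (vid D (vdom D f)) f" "\<chi> \<cdot> e = u"
  shows "ract (ucell f \<cdot> \<chi>) \<epsilon> \<cdot> e = ucell f"
proof -
  note ax = fg(1,2) adjunction_boundaries is_cellD[OF e(1)]
  have "ract (ucell f \<cdot> \<chi>) \<epsilon> \<cdot> e = ract (ucell f \<cdot> \<chi>) \<epsilon> \<cdot> ract e (ucell f)"
    using ract_ucell[of e] ax by simp
  also have "\<dots> = ract (ucell f \<cdot> u) (\<epsilon> \<cdot> ucell f)"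
    using ract_cvcmp[of e "ucell f" "ucell f \<cdot> \<chi>" \<epsilon>] e(2) ax by simp
  also have "\<dots> = ucell f"
    using v2comp_ract[of "ucell f \<cdot> u" "\<epsilon> \<cdot> ucell f" "vdom D f" "vcod D f"] zig ax by simp
  finally show ?thesis .
qed

lemma unit_lact_conjoint_counit:
  "lact u (ucell g \<cdot> ract (ucell f \<cdot> \<chi>) \<epsilon>) = \<chi>"
proof -
  note ax = fg(1,2) adjunction_boundaries
  let ?A = "vdom D f"
  have "ucell g \<cdot> ract (ucell f \<cdot> \<chi>) \<epsilon> = ract (ucell g) (ucell g) \<cdot> ract (ucell f \<cdot> \<chi>) \<epsilon>"
    using ract_ucell[of "ucell g"] ax by simp
  also have "\<dots> = ract (ucell (vcmp D g f) \<cdot> \<chi>) (ucell g \<cdot> \<epsilon>)"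
    using ract_cvcmp[of "ucell f \<cdot> \<chi>" \<epsilon> "ucell g" "ucell g"] ax by simp
  finally have "lact u (ucell g \<cdot> ract (ucell f \<cdot> \<chi>) \<epsilon>)
      = ract (lact u (ucell (vcmp D g f) \<cdot> \<chi>)) (ucell g \<cdot> \<epsilon>)"
    using lact_ract[of "ucell (vcmp D g f) \<cdot> \<chi>" u "ucell g \<cdot> \<epsilon>"] ax by simp
  also have "lact u (ucell (vcmp D g f) \<cdot> \<chi>) = lact u (ucell (vcmp D g f)) \<cdot> lact (idc (hu ?A)) \<chi>"
    using lact_cvcmp[of "idc (hu ?A)" \<chi> u "ucell (vcmp D g f)"] ax by simp
  also have "\<dots> = u \<cdot> \<chi>"
    using lact_ucell_vertical[of u ?A ?A] lact_ucell[of \<chi>] ax by simp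
  also have "\<dots> = ract (idc (hu ?A)) u \<cdot> ract \<chi> (ucell g)"
    using ract_ucell_vertical[of u ?A ?A] ract_ucell[of \<chi>] ax by simp
  also have "\<dots> = ract \<chi> (u \<cdot> ucell g)"
    using ract_cvcmp[of \<chi> "ucell g" "idc (hu ?A)" u] ax by simp
  also have "ract (ract \<chi> (u \<cdot> ucell g)) (ucell g \<cdot> \<epsilon>) = ract \<chi> (ract (u \<cdot> ucell g) (ucell g \<cdot> \<epsilon>))"
    using ract_ract[of \<chi> "u \<cdot> ucell g" "ucell g \<cdot> \<epsilon>"] ax by simp
  also have "\<dots> = \<chi>"
    using v2comp_ract[of "u \<cdot> ucell g" "ucell g \<cdot> \<epsilon>" "vcod D f" ?A] zag ract_ucell[of \<chi>] ax by simp
  finally show ?thesis .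
qed

text \<open>The counit \<open>\<sigma>\<close> is \<open>\<epsilon>\<close> pasted to the right of \<open>1\<^sub>f \<cdot> \<chi>\<close>; the second companion equation is
  checked after composing with the cartesian cell \<open>\<chi>\<close>, where it becomes \<open>zag\<close>.\<close>

lemma conjoint_companion_pair: "\<exists>e \<sigma>. companion_pair K f e \<sigma>"
proof -
  note ax = fg(1,2) adjunction_boundaries
  obtain e where e: "is_cell D e (hu (vdom D f)) K (vid D (vdom D f)) f" "\<chi> \<cdot> e = u"
    by (rule conjoint_unit_factor)
  define \<sigma> where "\<sigma> = ract (ucell f \<cdot> \<chi>) \<epsilon>"
  have \<sigma>: "is_cell D \<sigma> K (hu (vcod D f)) f (vid D (vcod D f))"
    unfolding \<sigma>_def is_cell_def using ax by simp
  note ax = ax is_cellD[OF e(1)] is_cellD[OF \<sigma>]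
  have "\<chi> \<cdot> (ru K \<cdot> (e \<odot> \<sigma>)) = lu (hu (vdom D f)) \<cdot> ((\<chi> \<odot> ucell g) \<cdot> (e \<odot> \<sigma>))"
    using cvcmp_reassoc[OF runit_nat[of \<chi>], of "e \<odot> \<sigma>"] ax by simp
  also have "\<dots> = lu (hu (vdom D f)) \<cdot> (u \<odot> (ucell g \<cdot> \<sigma>))"
    using interchange[of e \<chi> \<sigma> "ucell g"] e(2) ax by simp
  also have "\<dots> = lact u (ucell g \<cdot> \<sigma>) \<cdot> lu K"
    using lact_lunit[of u "ucell g \<cdot> \<sigma>"] ax by simp
  also have "\<dots> = \<chi> \<cdot> lu K"
    unfolding \<sigma>_def unit_lact_conjoint_counit ..
  finally have "ru K \<cdot> (e \<odot> \<sigma>) = lu K"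
    by (rule cartesian_factor_unique[of \<chi> _ "hu (vdom D f) \<otimes> K" "vid D (vdom D f)" "vid D (vcod D f)", rotated 3])
       (use conjoint ax in \<open>simp_all add: is_cell_def conjoint_cart_def\<close>)
  moreover have "\<sigma> \<cdot> e = ucell f"
    unfolding \<sigma>_def by (rule conjoint_counit_unit[OF e])
  ultimately show ?thesis
    unfolding companion_pair_def using e(1) \<sigma> ax by blast
qed

end

end

locale pointed_normal_lax_functor = double_cat D for D :: "('o,'v,'h,'c) dblcat" +
  fixes T :: "('o,'v,'h,'c) dfun" and \<iota> :: "('o,'v,'h,'c) dtrans"
  assumes normal_lax: "normal_lax_dfun D T"
    and unit_transformation: "double_transformation D (dfun_id D) T \<iota>"
begin

lemma functor_simps[simp]:
  "A \<in> Ob D \<Longrightarrow> fo T A \<in> Ob D"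
  "f \<in> Ver D \<Longrightarrow> fv T f \<in> Ver D" "f \<in> Ver D \<Longrightarrow> vdom D (fv T f) = fo T (vdom D f)"
  "f \<in> Ver D \<Longrightarrow> vcod D (fv T f) = fo T (vcod D f)"
  "J \<in> Hor D \<Longrightarrow> fh T J \<in> Hor D" "J \<in> Hor D \<Longrightarrow> hsrc D (fh T J) = fo T (hsrc D J)"
  "J \<in> Hor D \<Longrightarrow> htgt D (fh T J) = fo T (htgt D J)"
  "\<phi> \<in> Cel D \<Longrightarrow> fc T \<phi> \<in> Cel D" "\<phi> \<in> Cel D \<Longrightarrow> csrc D (fc T \<phi>) = fh T (csrc D \<phi>)"
  "\<phi> \<in> Cel D \<Longrightarrow> ctgt D (fc T \<phi>) = fh T (ctgt D \<phi>)"
  "\<phi> \<in> Cel D \<Longrightarrow> cleft D (fc T \<phi>) = fv T (cleft D \<phi>)"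
  "\<phi> \<in> Cel D \<Longrightarrow> cright D (fc T \<phi>) = fv T (cright D \<phi>)"
  using normal_lax unfolding normal_lax_dfun_def is_cell_def by auto

lemma functor_preserves[simp]:
  "f \<in> Ver D \<Longrightarrow> g \<in> Ver D \<Longrightarrow> vcod D f = vdom D g \<Longrightarrow> fv T (vcmp D g f) = vcmp D (fv T g) (fv T f)"
  "A \<in> Ob D \<Longrightarrow> fv T (vid D A) = vid D (fo T A)"
  "\<phi> \<in> Cel D \<Longrightarrow> \<psi> \<in> Cel D \<Longrightarrow> ctgt D \<phi> = csrc D \<psi> \<Longrightarrow> fc T (\<psi> \<cdot> \<phi>) = fc T \<psi> \<cdot> fc T \<phi>"
  "J \<in> Hor D \<Longrightarrow> fc T (idc J) = idc (fh T J)"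
  "A \<in> Ob D \<Longrightarrow> fh T (hu A) = hu (fo T A)"
  "f \<in> Ver D \<Longrightarrow> fc T (ucell f) = ucell (fv T f)"
  using normal_lax unfolding normal_lax_dfun_def by auto

lemma fcmp_simps[simp]:
  assumes "J \<in> Hor D" "K \<in> Hor D" "htgt D J = hsrc D K"
  shows "fcmp T J K \<in> Cel D" "csrc D (fcmp T J K) = fh T J \<otimes> fh T K" "ctgt D (fcmp T J K) = fh T (J \<otimes> K)"
    "cleft D (fcmp T J K) = vid D (fo T (hsrc D J))" "cright D (fcmp T J K) = vid D (fo T (htgt D K))"
  using normal_lax assms unfolding normal_lax_dfun_def is_cell_def by auto

lemma fcmp_nat:
  "\<phi> \<in> Cel D \<Longrightarrow> \<psi> \<in> Cel D \<Longrightarrow> cright D \<phi> = cleft D \<psi> \<Longrightarrow>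
   fc T (\<phi> \<odot> \<psi>) \<cdot> fcmp T (csrc D \<phi>) (csrc D \<psi>) = fcmp T (ctgt D \<phi>) (ctgt D \<psi>) \<cdot> (fc T \<phi> \<odot> fc T \<psi>)"
  using normal_lax unfolding normal_lax_dfun_def by metis

lemma fcmp_lunit: "J \<in> Hor D \<Longrightarrow> fc T (lu J) \<cdot> fcmp T (hu (hsrc D J)) J = lu (fh T J)"
  using normal_lax unfolding normal_lax_dfun_def by metis

lemma fcmp_runit: "J \<in> Hor D \<Longrightarrow> fc T (ru J) \<cdot> fcmp T J (hu (htgt D J)) = ru (fh T J)"
  using normal_lax unfolding normal_lax_dfun_def by metis

lemma companion_pair_image:
  assumes cp: "companion_pair M h e \<sigma>"
  shows "companion_pair (fh T M) (fv T h) (fc T e) (fc T \<sigma>)"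
proof -
  let ?A = "vdom D h" and ?B = "vcod D h"
  note c = companion_pairD[OF cp]
  note ax = c(1-14)
  have "ru (fh T M) \<cdot> (fc T e \<odot> fc T \<sigma>) = fc T (ru M) \<cdot> (fcmp T M (hu ?B) \<cdot> (fc T e \<odot> fc T \<sigma>))"
    using cvcmp_reassoc[OF fcmp_runit[OF c(2)], of "fc T e \<odot> fc T \<sigma>"] ax by simp
  also have "\<dots> = fc T (ru M) \<cdot> (fc T (e \<odot> \<sigma>) \<cdot> fcmp T (hu ?A) M)"
    using fcmp_nat[of e \<sigma>] ax by simp
  also have "\<dots> = fc T (ru M \<cdot> (e \<odot> \<sigma>)) \<cdot> fcmp T (hu ?A) M"
    using ax by simp
  also have "\<dots> = lu (fh T M)"
    using fcmp_lunit[of M] c(16) ax by simp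
  finally have "ru (fh T M) \<cdot> (fc T e \<odot> fc T \<sigma>) = lu (fh T M)" .
  moreover have "fc T \<sigma> \<cdot> fc T e = ucell (fv T h)"
    using functor_preserves(3)[of e \<sigma>] c(15) ax by simp
  ultimately show ?thesis
    unfolding companion_pair_def is_cell_def using ax by simp
qed

lemma unit_simps[simp]:
  "X \<in> Ob D \<Longrightarrow> tob \<iota> X \<in> Ver D" "X \<in> Ob D \<Longrightarrow> vdom D (tob \<iota> X) = X"
  "X \<in> Ob D \<Longrightarrow> vcod D (tob \<iota> X) = fo T X"
  "J \<in> Hor D \<Longrightarrow> thor \<iota> J \<in> Cel D" "J \<in> Hor D \<Longrightarrow> csrc D (thor \<iota> J) = J"
  "J \<in> Hor D \<Longrightarrow> ctgt D (thor \<iota> J) = fh T J" "J \<in> Hor D \<Longrightarrow> cleft D (thor \<iota> J) = tob \<iota> (hsrc D J)"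
  "J \<in> Hor D \<Longrightarrow> cright D (thor \<iota> J) = tob \<iota> (htgt D J)"
  using unit_transformation unfolding double_transformation_def dfun_id_def is_cell_def by auto

lemma unit_hunit[simp]: "X \<in> Ob D \<Longrightarrow> thor \<iota> (hu X) = ucell (tob \<iota> X)"
  using unit_transformation unfolding double_transformation_def by blast

lemma unit_naturality: "\<phi> \<in> Cel D \<Longrightarrow> thor \<iota> (ctgt D \<phi>) \<cdot> \<phi> = fc T \<phi> \<cdot> thor \<iota> (csrc D \<phi>)"
  using unit_transformation unfolding double_transformation_def dfun_id_def by simp

lemma unit_vertical_naturality:
  "f \<in> Ver D \<Longrightarrow> vcmp D (fv T f) (tob \<iota> (vdom D f)) = vcmp D (tob \<iota> (vcod D f)) f"
  using unit_transformation unfolding double_transformation_def dfun_id_def by simp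

subsection \<open>The Beck--Chevalley condition for companions\<close>

lemma iota_star_comparison:
  assumes K: "companion_pair K f e \<sigma>"
    and P: "companion_pair P (tob \<iota> (hsrc D K)) \<eta> \<theta>\<^sub>P"
    and Q: "companion_cart D (tob \<iota> (htgt D K)) Q \<theta>"
  shows "(fc T \<sigma> \<cdot> (lu (fh T K) \<cdot> (\<theta>\<^sub>P \<odot> idc (fh T K)))) \<cdot> iota_star D T \<iota> K P \<eta> Q \<theta>
    = \<theta> \<cdot> (lu Q \<cdot> (\<sigma> \<odot> idc Q))"
proof -
  let ?A = "hsrc D K" and ?C = "htgt D K" and ?TK = "fh T K" and ?\<iota>K = "thor \<iota> K"
  let ?I = "hu (fo T ?C)"
  note cK = companion_pairD[OF K] and cP = companion_pairD[OF P]
  have Q': "Q \<in> Hor D" "\<theta> \<in> Cel D" "csrc D \<theta> = Q" "ctgt D \<theta> = ?I" "cleft D \<theta> = tob \<iota> ?C"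
    "cright D \<theta> = vid D (fo T ?C)" "hsrc D Q = ?C" "htgt D Q = fo T ?C"
    using Q cK cell_boundary[of \<theta>] unfolding companion_cart_def is_cell_def by auto
  note ax = cK(1-14) cP(1-14) Q'
  have "(fc T \<sigma> \<cdot> (lu ?TK \<cdot> (\<theta>\<^sub>P \<odot> idc ?TK))) \<cdot> iota_star D T \<iota> K P \<eta> Q \<theta>
      = fc T \<sigma> \<cdot> (lu ?TK \<cdot> (ru (hu (fo T ?A) \<otimes> ?TK) \<cdot>
          (((\<theta>\<^sub>P \<odot> idc ?TK) \<odot> idc ?I) \<cdot> (((\<eta> \<odot> ?\<iota>K) \<odot> \<theta>) \<cdot> (lui K \<odot> idc Q)))))"
    unfolding iota_star_def using cvcmp_reassoc[OF runit_nat[of "\<theta>\<^sub>P \<odot> idc ?TK"]] ax by simp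
  also have "\<dots> = fc T \<sigma> \<cdot> (lu ?TK \<cdot> (ru (hu (fo T ?A) \<otimes> ?TK) \<cdot>
          (((ucell (tob \<iota> ?A) \<odot> ?\<iota>K) \<odot> \<theta>) \<cdot> (lui K \<odot> idc Q))))"
    using interchange[of \<eta> \<theta>\<^sub>P ?\<iota>K "idc ?TK"] interchange[of "\<eta> \<odot> ?\<iota>K" "\<theta>\<^sub>P \<odot> idc ?TK" \<theta> "idc ?I"]
      cP(15) ax by simp
  also have "\<dots> = fc T \<sigma> \<cdot> (ru ?TK \<cdot> ((lu ?TK \<odot> idc ?I) \<cdot>
          (((ucell (tob \<iota> ?A) \<odot> ?\<iota>K) \<odot> \<theta>) \<cdot> (lui K \<odot> idc Q))))"
    using cvcmp_reassoc[OF runit_nat[of "lu ?TK"]] ax by simp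
  also have "\<dots> = fc T \<sigma> \<cdot> (ru ?TK \<cdot> (lact (ucell (tob \<iota> ?A)) ?\<iota>K \<odot> \<theta>))"
    using interchange[of "lui K" "ucell (tob \<iota> ?A) \<odot> ?\<iota>K" "idc Q" \<theta>]
      interchange[of "(ucell (tob \<iota> ?A) \<odot> ?\<iota>K) \<cdot> lui K" "lu ?TK" \<theta> "idc ?I"] ax
    unfolding lact_def by simp
  also have "\<dots> = ru ?I \<cdot> ((fc T \<sigma> \<odot> idc ?I) \<cdot> (?\<iota>K \<odot> \<theta>))"
    using lact_ucell[of ?\<iota>K] cvcmp_reassoc[OF runit_nat[of "fc T \<sigma>"], symmetric] ax by simp
  also have "\<dots> = lu ?I \<cdot> ((ucell (tob \<iota> ?C) \<cdot> \<sigma>) \<odot> \<theta>)"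
    using interchange[of ?\<iota>K "fc T \<sigma>" \<theta> "idc ?I"] unit_naturality[of \<sigma>] ax by simp
  also have "\<dots> = \<theta> \<cdot> (lu Q \<cdot> (\<sigma> \<odot> idc Q))"
    using interchange[of \<sigma> "ucell (tob \<iota> ?C)" "idc Q" \<theta>] cvcmp_reassoc[OF lunit_nat[of \<theta>]] ax by simp
  finally show ?thesis .
qed

lemma companion_right_BC:
  assumes K: "companion_pair K f e \<sigma>"
  shows "right_BC D T \<iota> K"
  unfolding right_BC_def
proof (intro allI impI)
  fix P \<eta> Q \<theta>
  assume cP: "companion_opcart D (tob \<iota> (hsrc D K)) P \<eta>"
    and cQ: "companion_cart D (tob \<iota> (htgt D K)) Q \<theta>"
  obtain \<theta>\<^sub>P where P: "companion_pair P (tob \<iota> (hsrc D K)) \<eta> \<theta>\<^sub>P"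
    using companion_opcart_pair[OF cP] by blast
  note cK = companion_pairD[OF K] and cP = companion_pairD[OF P]
  have Q: "Q \<in> Hor D" "\<theta> \<in> Cel D" "csrc D \<theta> = Q" "ctgt D \<theta> = hu (fo T (htgt D K))"
    "cleft D \<theta> = tob \<iota> (htgt D K)" "cright D \<theta> = vid D (fo T (htgt D K))"
    "hsrc D Q = htgt D K" "htgt D Q = fo T (htgt D K)" "cartesian D \<theta>"
    using cQ cK cell_boundary[of \<theta>] unfolding companion_cart_def is_cell_def by auto
  note ax = cK(1-14) cP(1-14) Q
  have c1: "cartesian D (\<theta> \<cdot> (lu Q \<cdot> (\<sigma> \<odot> idc Q)))"
    by (rule cartesian_cvcmp[OF companion_restriction_cartesian[OF K] Q(9)]) (use ax in simp_all)
  have c2: "cartesian D (fc T \<sigma> \<cdot> (lu (fh T K) \<cdot> (\<theta>\<^sub>P \<odot> idc (fh T K))))"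
    by (rule cartesian_cvcmp[OF companion_restriction_cartesian[OF P]
          companion_counit_cartesian[OF companion_pair_image[OF K]]]) (use ax in simp_all)
  have \<Phi>: "is_cell D (iota_star D T \<iota> K P \<eta> Q \<theta>) (K \<otimes> Q) (P \<otimes> fh T K)
      (vid D (hsrc D (K \<otimes> Q))) (vid D (htgt D (K \<otimes> Q)))"
    unfolding iota_star_def is_cell_def using ax by simp
  show "cell_invertible D (iota_star D T \<iota> K P \<eta> Q \<theta>)"
    by (rule cartesian_comparison_invertible[OF c1 c2 \<Phi> _ _ iota_star_comparison[OF K P cQ]])
      (use unit_vertical_naturality[of f] ax in simp_all)
qed

end

theorem corollary5p7:
  fixes D :: "('o,'v,'h,'c) dblcat"
    and T :: "('o,'v,'h,'c) dfun"
    and \<mu> \<iota> :: "('o,'v,'h,'c) dtrans"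
    and g :: 'v and K :: 'h and \<chi> :: 'c
  assumes "equipment D"
    and "normal_lax_double_monad D T \<mu> \<iota>"
    and "g \<in> Ver D"
    and "has_left_adjoint D g"
    and "conjoint_cart D g K \<chi>"
  shows "right_BC D T \<iota> K"
proof -
  interpret pointed_normal_lax_functor D T \<iota>
    using assms(2) unfolding normal_lax_double_monad_def pointed_normal_lax_functor_def
      pointed_normal_lax_functor_axioms_def double_cat_def by blast
  obtain f where "vadjunction D f g"
    using assms(4) unfolding has_left_adjoint_def by blast
  then obtain e \<sigma> where "companion_pair K f e \<sigma>"
    using conjoint_companion_pair[OF _ _ _ _ _ _ _ _ assms(5)] unfolding vadjunction_def by metis
  then show ?thesis
    by (rule companion_right_BC)
qed

end
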